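(* Let $\alpha\in[0,1]$ and assume (H1). Let $C^{init}\in X_\alpha^+$ and assume there exists $U\in\mathcal K_1\cup\mathcal K_2$ such that $\sum_{i\ge1}U(i^\alpha)C_i^{init}<+\infty$. Then there exists at least one solution $C\in\mathcal C^0([0,+\infty),X_\alpha^+)$ of the system on $[0,+\infty)$ with $C(0)=C^{init}$, and for each $T\in(0,+\infty)$, $$\sup_{t\in[0,T]}\sum_{i\ge1}U(i^\alpha)C_i(t)<+\infty.$$
   Context: Let $\lambda\ge 0$ and let $(a_i)_{i\ge1}$, $(b_i)_{i\ge1}$ be sequences of nonnegative real numbers. Consider the infinite system of ODEs $\frac{d}{dt}C_1=\lambda-\sum_{j\ge1}a_jC_1C_j-a_1C_1^2$, $\frac{d}{dt}C_i=J_{i-1}-J_i$ for $i\ge2$, where $J_i=a_iC_1C_i-b_{i+1}C_{i+1}$ for $i\ge1$. For $T\in(0,+\infty]$, a solution on $[0,T)$ is a sequence $C=(C_i)_{i\ge1}$ of nonnegative functions on $[0,T)$ such that for every $t\in(0,T)$: each $C_i$ is continuous on $[0,t]$, $\sum_{j\ge1}a_jC_j\in L^1(0,t)$, and $C_1(t)=C_1(0)+\lambda t-\int_0^t\big(C_1(s)\sum_{j\ge1}a_jC_j(s)+a_1C_1(s)^2\big)ds$, $C_i(t)=C_i(0)+\int_0^t(J_{i-1}(s)-J_i(s))ds$ for $i\ge2$. For $\alpha\ge0$, $X_\alpha=\{x=(x_k)_{k\ge1}\in\mathbb R^{\mathbb N^*}:\|x\|_{X_\alpha}:=\sum_{k\ge1}k^\alpha|x_k|<\infty\}$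 and $X_\alpha^+$ is its cone of nonnegative sequences. (H1): there exists $a\ge0$ such that $0\le a_i\le a\,i^\alpha$ and $b_i\ge0$ for all $i\ge1$. $\mathcal K_1$ is the set of $U\in C^1([0,\infty))\cap W^{2,\infty}_{loc}(0,\infty)$ with $U\ge0$, $U$ convex, $U(0)=0$, $U'(0)\ge0$ and $U'$ concave. $\mathcal K_2$ is the set of $U\in C^2([0,\infty),\mathbb R_+)$ with $U(0)=U'(0)=0$, $U'$ convex, and satisfying the $\Delta_2$-condition: there is $k_U>0$ with $U'(2r)\le k_UU'(r)$ for all $r\ge0$. *)

theory Defs
  imports "HOL-Analysis.Analysis"
begin

text \<open>Sequences x = (x_k)_{k>=1} are modelled as functions nat => real; the value at
  index 0 is irrelevant and ignored. A time-dependent sequence C is a function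
  real => nat => real, C t i being C_i(t).\<close>

definition Xnorm :: "real \<Rightarrow> (nat \<Rightarrow> real) \<Rightarrow> real" where
  "Xnorm \<alpha> x = (\<Sum>\<^sub>\<infinity>k\<in>{1..}. real k powr \<alpha> * \<bar>x k\<bar>)"

definition in_X :: "real \<Rightarrow> (nat \<Rightarrow> real) \<Rightarrow> bool" where
  "in_X \<alpha> x \<longleftrightarrow> (\<lambda>k. real k powr \<alpha> * \<bar>x k\<bar>) summable_on {1..}"

definition in_Xplus :: "real \<Rightarrow> (nat \<Rightarrow> real) \<Rightarrow> bool" where
  "in_Xplus \<alpha> x \<longleftrightarrow> in_X \<alpha> x \<and> (\<forall>k\<ge>1. x k \<ge> 0)"

definition flux :: "(nat \<Rightarrow> real) \<Rightarrow> (nat \<Rightarrow> real) \<Rightarrow> (nat \<Rightarrow> real) \<Rightarrow> nat \<Rightarrow> real" where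
  "flux a b c i = a i * c 1 * c i - b (i + 1) * c (i + 1)"

definition asum :: "(nat \<Rightarrow> real) \<Rightarrow> (nat \<Rightarrow> real) \<Rightarrow> real" where
  "asum a c = (\<Sum>\<^sub>\<infinity>j\<in>{1..}. a j * c j)"

definition is_solution_global ::
  "real \<Rightarrow> (nat \<Rightarrow> real) \<Rightarrow> (nat \<Rightarrow> real) \<Rightarrow> (real \<Rightarrow> nat \<Rightarrow> real) \<Rightarrow> bool" where
  "is_solution_global lam a b C \<longleftrightarrow>
     (\<forall>t\<ge>0. \<forall>i\<ge>1. C t i \<ge> 0) \<and>
     (\<forall>t>0.
        (\<forall>i\<ge>1. continuous_on {0..t} (\<lambda>s. C s i)) \<and>
        (\<forall>s\<in>{0..t}. (\<lambda>j. a j * C s j) summable_on {1..}) \<and>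
        set_integrable lborel {0..t} (\<lambda>s. asum a (C s)) \<and>
        C t 1 = C 0 1 + lam * t
           - (LINT s:{0..t}|lborel. C s 1 * asum a (C s) + a 1 * (C s 1)\<^sup>2) \<and>
        (\<forall>i\<ge>2. C t i = C 0 i
           + (LINT s:{0..t}|lborel. flux a b (C s) (i - 1) - flux a b (C s) i)))"

text \<open>The class K_1. C^1 on [0,oo) via a continuous one-sided derivative; W^{2,oo}_loc(0,oo)
  means U' is Lipschitz on every compact subinterval of (0,oo).\<close>
definition K1 :: "(real \<Rightarrow> real) \<Rightarrow> bool" where
  "K1 U \<longleftrightarrow> (\<exists>U'.
      continuous_on {0..} U' \<and>
      (\<forall>x\<ge>0. (U has_real_derivative U' x) (at x within {0..})) \<and>
      (\<forall>x y. 0 < x \<longrightarrow> x \<le> y \<longrightarrow> (\<exists>L. L-lipschitz_on {x..y} U')) \<and>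
      (\<forall>x\<ge>0. U x \<ge> 0) \<and> convex_on {0..} U \<and> U 0 = 0 \<and> U' 0 \<ge> 0 \<and>
      concave_on {0..} U')"

definition K2 :: "(real \<Rightarrow> real) \<Rightarrow> bool" where
  "K2 U \<longleftrightarrow> (\<exists>U' U''.
      (\<forall>x\<ge>0. (U has_real_derivative U' x) (at x within {0..})) \<and>
      (\<forall>x\<ge>0. (U' has_real_derivative U'' x) (at x within {0..})) \<and>
      continuous_on {0..} U'' \<and>
      (\<forall>x\<ge>0. U x \<ge> 0) \<and> U 0 = 0 \<and> U' 0 = 0 \<and> convex_on {0..} U' \<and>
      (\<exists>k>0. \<forall>r\<ge>0. U' (2 * r) \<le> k * U' r))"

end

(*
  Existence by compactness. The system is truncated to sizes at most N and integrated by an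
  explicit Euler scheme whose time step is small enough to keep it nonnegative up to time N.
  Along the scheme C_1 <= C_1(0) + lam t, and for every weight w with
  (w_(i+1) - w_i) a_i <= K w_i the moment sum_i w_i C_i grows at most exponentially, uniformly
  in N (summation by parts turns the flux terms into increments of w). Convexity and a doubling
  property make w_i = U(i^alpha) such a weight for U in K_1 or K_2, and a de la Vallee Poussin
  argument gives another one, g, with g_i / i^alpha -> oo and finite moment for the initial
  datum. The g-moment makes every component Lipschitz in time and the X_alpha tails uniformly
  small, so a diagonal subsequence converging at all rational times converges at all times;
  the limit is continuous in X_alpha, the truncated right-hand sides converge to the full ones,
  and the limit satisfies the integral equations.
*)

theory Submission
  imports Defs "HOL-Library.Diagonal_Subsequence"
begin

section \<open>Convex profiles and admissible weights\<close>

text \<open>The classes \<open>K\<^sub>1\<close> and \<open>K\<^sub>2\<close> enter the proof only through this property and a doubling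
  bound \<open>U(2x) \<le> K U(x)\<close>.\<close>
definition convex_profile :: "(real \<Rightarrow> real) \<Rightarrow> (real \<Rightarrow> real) \<Rightarrow> bool" where
  "convex_profile U U' \<longleftrightarrow> (\<forall>x\<ge>0. (U has_real_derivative U' x) (at x within {0..})) \<and>
     (\<forall>x\<ge>0. U x \<ge> 0) \<and> U 0 = 0 \<and> (\<forall>x y. 0 < x \<longrightarrow> x \<le> y \<longrightarrow> U' x \<le> U' y)"

lemma mvt_halfline:
  fixes U U' :: "real \<Rightarrow> real"
  assumes deriv: "\<And>x. x \<ge> 0 \<Longrightarrow> (U has_real_derivative U' x) (at x within {0..})"
    and "0 \<le> x" "x < y"
  obtains z where "x < z" "z < y" "U y - U x = U' z * (y - x)"
proof -
  have "continuous_on {x..y} U"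
    by (rule DERIV_continuous_on[where D=U'], rule DERIV_subset[where s="{0..}"])
      (use deriv assms in auto)
  moreover have "(U has_derivative (\<lambda>h. U' z * h)) (at z)" if "x < z" "z < y" for z
  proof -
    have "at z within {0..} = at z"
      using that assms by (intro at_within_interior) auto
    moreover have "(U has_real_derivative U' z) (at z within {0..})"
      using deriv that assms by simp
    ultimately show ?thesis by (simp add: has_field_derivative_def)
  qed
  ultimately obtain z where "x < z" "z < y" "U y - U x = (\<lambda>h. U' z * h) (y - x)"
    by (rule mvt[OF \<open>x < y\<close>, of U "\<lambda>z h. U' z * h"]) blast+
  then show ?thesis using that by simp
qed

context
  fixes U U' :: "real \<Rightarrow> real"
  assumes profile: "convex_profile U U'"
begin

private lemma deriv: "x \<ge> 0 \<Longrightarrow> (U has_real_derivative U' x) (at x within {0..})"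
  and nonneg: "x \<ge> 0 \<Longrightarrow> U x \<ge> 0"
  and at_0: "U 0 = 0"
  and deriv_mono: "0 < x \<Longrightarrow> x \<le> y \<Longrightarrow> U' x \<le> U' y"
  using profile by (auto simp: convex_profile_def)

lemma convex_profile_deriv_nonneg:
  assumes "y > 0"
  shows "U' y \<ge> 0"
proof -
  obtain z where z: "0 < z" "z < y" "U y - U 0 = U' z * (y - 0)"
    using mvt_halfline[OF deriv order_refl assms] by blast
  then have "U' z \<ge> 0"
    using nonneg[of y] at_0 assms by (simp add: zero_le_mult_iff)
  then show ?thesis using deriv_mono[of z y] z by simp
qed

lemma convex_profile_increment_le:
  assumes "0 \<le> x" "x \<le> y"
  shows "U y - U x \<le> U' y * (y - x)"
proof (cases "x = y")
  case False
  then have "x < y" using assms by simp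
  then obtain z where z: "x < z" "z < y" "U y - U x = U' z * (y - x)"
    using mvt_halfline[OF deriv assms(1)] by blast
  then show ?thesis using deriv_mono[of z y] assms by (simp add: mult_right_mono)
qed simp

lemma convex_profile_mono:
  assumes "0 \<le> x" "x \<le> y"
  shows "U x \<le> U y"
proof (cases "x = y")
  case False
  then have "x < y" using assms by simp
  then obtain z where z: "x < z" "z < y" "U y - U x = U' z * (y - x)"
    using mvt_halfline[OF deriv assms(1)] by blast
  moreover have "U' z * (y - x) \<ge> 0" using convex_profile_deriv_nonneg[of z] z assms by simp
  ultimately show ?thesis by linarith
qed simp

lemma convex_profile_deriv_le_increment:
  assumes "y > 0"
  shows "y * U' y \<le> U (2 * y) - U y"
proof -
  obtain z where z: "y < z" "z < 2 * y" "U (2 * y) - U y = U' z * (2 * y - y)"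
    using mvt_halfline[OF deriv, of y "2 * y"] assms by auto
  then show ?thesis using deriv_mono[of y z] assms by (simp add: mult.commute mult_right_mono)
qed

text \<open>A doubling condition on the derivative gives one on the profile:
  \<open>U(2x) - U(x) \<le> x U'(2x) \<le> 2k\<^sup>2 (x/2) U'(x/2) \<le> 2k\<^sup>2 U(x)\<close>.\<close>
lemma convex_profile_doubling:
  assumes k: "k \<ge> 0" and doubling: "\<And>x. x \<ge> 0 \<Longrightarrow> U' (2 * x) \<le> k * U' x"
    and "x \<ge> 0"
  shows "U (2 * x) \<le> (1 + 2 * k\<^sup>2) * U x"
proof (cases "x = 0")
  case True
  then show ?thesis using at_0 by simp
next
  case False
  with \<open>x \<ge> 0\<close> have x: "x > 0" by simp
  have "U' x \<le> k * U' (x / 2)" using doubling[of "x / 2"] x by simp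
  then have "k * U' x \<le> k * (k * U' (x / 2))"
    using k by (rule mult_left_mono)
  then have "U' (2 * x) \<le> k\<^sup>2 * U' (x / 2)"
    using doubling[of x] x by (simp add: power2_eq_square mult.assoc)
  then have "U' (2 * x) * x \<le> 2 * k\<^sup>2 * ((x / 2) * U' (x / 2))"
    using x by (simp add: mult_right_mono algebra_simps)
  also have "\<dots> \<le> 2 * k\<^sup>2 * U x"
    using convex_profile_deriv_le_increment[of "x / 2"] nonneg[of "x / 2"] x
    by (intro mult_left_mono) auto
  finally show ?thesis
    using convex_profile_increment_le[of x "2 * x"] x by (simp add: algebra_simps)
qed

end

lemma K1_convex_profile:
  assumes "K1 U"
  obtains U' where "convex_profile U U'" "\<And>x. x \<ge> 0 \<Longrightarrow> U' (2 * x) \<le> 2 * U' x"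
proof -
  from assms obtain U' where
    deriv: "\<forall>x\<ge>0. (U has_real_derivative U' x) (at x within {0..})" and
    nonneg: "\<forall>x\<ge>0. U x \<ge> 0" and convex: "convex_on {0..} U" and "U 0 = 0" and
    "U' 0 \<ge> 0" and concave: "concave_on {0..} U'"
    unfolding K1_def by blast
  have tangent: "U x - U c \<ge> U' c * (x - c)" if "c > 0" "x \<ge> 0" for c x
    using convex_on_imp_above_tangent[OF convex, of c x] that deriv by auto
  have "U' x \<le> U' y" if "0 < x" "x \<le> y" for x y
  proof (cases "x = y")
    case False
    have "(U' x - U' y) * (y - x) \<le> 0"
      using tangent[of x y] tangent[of y x] that by (simp add: algebra_simps)
    then show ?thesis using that False by (simp add: mult_le_0_iff)
  qed simp
  then have "convex_profile U U'"
    unfolding convex_profile_def using deriv nonneg \<open>U 0 = 0\<close> by blast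
  moreover have "U' (2 * x) \<le> 2 * U' x" if "x \<ge> 0" for x
    using concave_onD[OF concave, of "1/2" 0 "2 * x"] that \<open>U' 0 \<ge> 0\<close> by simp
  ultimately show ?thesis using that by blast
qed

lemma K2_convex_profile:
  assumes "K2 U"
  obtains U' k where "convex_profile U U'" "k \<ge> 0" "\<And>x. x \<ge> 0 \<Longrightarrow> U' (2 * x) \<le> k * U' x"
proof -
  from assms obtain U' k where
    deriv: "\<forall>x\<ge>0. (U has_real_derivative U' x) (at x within {0..})" and
    nonneg: "\<forall>x\<ge>0. U x \<ge> 0" and U0: "U 0 = 0" and U'0: "U' 0 = 0" and
    convex: "convex_on {0..} U'" and "k > 0" and doubling: "\<forall>r\<ge>0. U' (2 * r) \<le> k * U' r"
    unfolding K2_def by blast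
  have chord: "U' s \<le> (s / t) * U' t" if "0 \<le> s" "s \<le> t" "t > 0" for s t
    using convex_onD[OF convex, of "s / t" 0 t] that U'0 by simp
  have deriv_nonneg: "U' y \<ge> 0" if "y > 0" for y
  proof (rule ccontr)
    assume "\<not> U' y \<ge> 0"
    obtain z where z: "0 < z" "z < y" "U y - U 0 = U' z * (y - 0)"
      using mvt_halfline[OF deriv[rule_format], of 0 y] \<open>y > 0\<close> by auto
    have "U' z \<le> (z / y) * U' y" using chord[of z y] z by simp
    also have "\<dots> < 0" using \<open>\<not> U' y \<ge> 0\<close> z by (intro mult_pos_neg) auto
    finally have "U y < 0" using z U0 \<open>y > 0\<close> by (simp add: mult_neg_pos)
    then show False using nonneg[rule_format, of y] \<open>y > 0\<close> by simp
  qed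
  have "U' x \<le> U' y" if "0 < x" "x \<le> y" for x y
  proof -
    have "U' x \<le> (x / y) * U' y" using chord[of x y] that by simp
    also have "\<dots> \<le> U' y"
      using deriv_nonneg[of y] that mult_right_mono[of "x / y" 1 "U' y"] by simp
    finally show ?thesis .
  qed
  then have "convex_profile U U'"
    unfolding convex_profile_def using deriv nonneg U0 by blast
  then show ?thesis using that[of U' k] \<open>k > 0\<close> doubling by simp
qed

lemma K_class_convex_doubling:
  assumes "K1 U \<or> K2 U"
  obtains U' K where "convex_profile U U'" "\<And>x. x \<ge> 0 \<Longrightarrow> U (2 * x) \<le> K * U x"
proof -
  obtain U' k where U': "convex_profile U U'" and "k \<ge> 0"
    and "\<And>x. x \<ge> 0 \<Longrightarrow> U' (2 * x) \<le> k * U' x"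
  proof (cases "K1 U")
    case True
    then show ?thesis using K1_convex_profile[of U] that[of _ 2] by auto
  next
    case False
    then show ?thesis using assms K2_convex_profile[of U] that by blast
  qed
  with convex_profile_doubling[OF U'] show ?thesis
    using that[OF U'] by blast
qed

lemma powr_Suc_le_add_one:
  fixes \<alpha> :: real
  assumes "0 \<le> \<alpha>" "\<alpha> \<le> 1" "i \<ge> 1"
  shows "real (i + 1) powr \<alpha> \<le> real i powr \<alpha> + 1"
proof -
  have i: "real i > 0" using assms by simp
  have "real (i + 1) powr \<alpha> = real i * real (i + 1) powr (\<alpha> - 1) + real (i + 1) powr (\<alpha> - 1)"
    using powr_add[of "real (i + 1)" 1 "\<alpha> - 1"] by (simp add: algebra_simps)
  also have "\<dots> \<le> real i * real i powr (\<alpha> - 1) + 1"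
    using powr_mono2'[of "\<alpha> - 1" "real i" "real (i + 1)"] powr_mono2'[of "\<alpha> - 1" 1 "real (i + 1)"]
      assms i by (intro add_mono mult_left_mono) auto
  also have "real i * real i powr (\<alpha> - 1) = real i powr \<alpha>"
    using powr_add[of "real i" 1 "\<alpha> - 1"] by simp
  finally show ?thesis .
qed

lemma powr_Suc_le_double:
  fixes \<alpha> :: real
  assumes "0 \<le> \<alpha>" "\<alpha> \<le> 1" "i \<ge> 1"
  shows "real (i + 1) powr \<alpha> \<le> 2 * real i powr \<alpha>"
proof -
  have "real (i + 1) powr \<alpha> \<le> (2 * real i) powr \<alpha>"
    using assms by (intro powr_mono2) auto
  also have "\<dots> = 2 powr \<alpha> * real i powr \<alpha>" by (simp add: powr_mult)
  also have "\<dots> \<le> 2 * real i powr \<alpha>"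
    using powr_mono[of \<alpha> 1 2] assms by (intro mult_right_mono) auto
  finally show ?thesis .
qed

text \<open>The condition \<open>(w\<^sub>i\<^sub>+\<^sub>1 - w\<^sub>i) a\<^sub>i \<le> K w\<^sub>i\<close> is what lets the moment \<open>\<Sum> w\<^sub>i C\<^sub>i\<close> grow at most
  exponentially: after summation by parts, the flux \<open>J\<^sub>i\<close> is weighted by \<open>w\<^sub>i\<^sub>+\<^sub>1 - w\<^sub>i\<close>.\<close>
definition admissible_weight :: "(nat \<Rightarrow> real) \<Rightarrow> real \<Rightarrow> (nat \<Rightarrow> real) \<Rightarrow> bool" where
  "admissible_weight a K w \<longleftrightarrow>
     (\<forall>i\<ge>1. 0 \<le> w i \<and> w i \<le> w (i + 1) \<and> (w (i + 1) - w i) * a i \<le> K * w i)"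

lemma admissible_weight_mono:
  assumes "admissible_weight a K w" "K \<le> K'"
  shows "admissible_weight a K' w"
  using assms order_trans[OF _ mult_right_mono[OF \<open>K \<le> K'\<close>]]
  unfolding admissible_weight_def by blast

text \<open>\<open>(U y - U x) c \<le> U'(y) (y - x) c \<le> A y U'(y) \<le> A U(2y) \<le> A U(4x) \<le> A K\<^sup>2 U(x)\<close>.\<close>
lemma convex_profile_increment_doubling:
  assumes profile: "convex_profile U U'" and doubling: "\<And>x. x \<ge> 0 \<Longrightarrow> U (2 * x) \<le> K * U x"
    and "0 \<le> K" "0 \<le> A" and xy: "0 < x" "x \<le> y" "y - x \<le> 1" "y \<le> 2 * x"
    and c: "0 \<le> c" "c \<le> A * x"
  shows "(U y - U x) * c \<le> A * K * K * U x"
proof -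
  have nonneg: "z \<ge> 0 \<Longrightarrow> U z \<ge> 0" for z
    using profile by (simp add: convex_profile_def)
  have U'y: "U' y \<ge> 0" using convex_profile_deriv_nonneg[OF profile, of y] xy by simp
  have "c \<le> A * y" using c xy \<open>0 \<le> A\<close> by (meson mult_left_mono order_trans)
  have "(U y - U x) * c \<le> (U' y * (y - x)) * c"
    using convex_profile_increment_le[OF profile, of x y] xy c by (intro mult_right_mono) auto
  also have "\<dots> \<le> U' y * (A * y)"
  proof (rule mult_mono)
    show "U' y * (y - x) \<le> U' y" using mult_left_mono[OF xy(3) U'y] by simp
  qed (use U'y c \<open>c \<le> A * y\<close> in auto)
  also have "\<dots> = A * (y * U' y)" by simp
  also have "\<dots> \<le> A * U (2 * y)"
    using convex_profile_deriv_le_increment[OF profile, of y] nonneg[of y] xy \<open>0 \<le> A\<close>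
    by (intro mult_left_mono) auto
  also have "\<dots> \<le> A * U (2 * (2 * x))"
    using convex_profile_mono[OF profile, of "2 * y" "2 * (2 * x)"] xy \<open>0 \<le> A\<close>
    by (intro mult_left_mono) auto
  also have "\<dots> \<le> A * (K * (K * U x))"
    using doubling[of "2 * x"] doubling[of x] mult_left_mono[OF doubling[of x] \<open>0 \<le> K\<close>] xy \<open>0 \<le> A\<close>
    by (intro mult_left_mono) auto
  finally show ?thesis by (simp add: mult.assoc)
qed

lemma K_class_admissible_weight:
  fixes U :: "real \<Rightarrow> real" and a :: "nat \<Rightarrow> real"
  assumes U: "K1 U \<or> K2 U" and \<alpha>: "0 \<le> \<alpha>" "\<alpha> \<le> 1" and "A \<ge> 0"
    and a: "\<And>i. i \<ge> 1 \<Longrightarrow> 0 \<le> a i \<and> a i \<le> A * real i powr \<alpha>"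
  obtains K where "admissible_weight a K (\<lambda>i. U (real i powr \<alpha>))"
proof -
  obtain U' K0 where profile: "convex_profile U U'"
    and doubling0: "\<And>x. x \<ge> 0 \<Longrightarrow> U (2 * x) \<le> K0 * U x"
    using K_class_convex_doubling[OF U] by blast
  have nonneg: "x \<ge> 0 \<Longrightarrow> U x \<ge> 0" for x
    using profile by (simp add: convex_profile_def)
  define K where "K = max K0 0"
  have doubling: "U (2 * x) \<le> K * U x" if "x \<ge> 0" for x
    using doubling0[OF that] mult_right_mono[of K0 K "U x"] nonneg[OF that] by (simp add: K_def)
  have "(U (real (i + 1) powr \<alpha>) - U (real i powr \<alpha>)) * a i \<le> A * K * K * U (real i powr \<alpha>)"
    if i: "i \<ge> 1" for i
  proof (rule convex_profile_increment_doubling[where K=K and U=U and U'=U', OF profile doubling])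
    show "0 < real i powr \<alpha>" "real i powr \<alpha> \<le> real (i + 1) powr \<alpha>"
      using \<alpha> i by (auto intro: powr_mono2)
  qed (use powr_Suc_le_add_one[OF \<alpha> i] powr_Suc_le_double[OF \<alpha> i] a[OF i] \<open>A \<ge> 0\<close> in
        \<open>auto simp: K_def\<close>)
  moreover have "U (real i powr \<alpha>) \<le> U (real (i + 1) powr \<alpha>)" for i
    using \<alpha> by (intro convex_profile_mono[OF profile] powr_mono2) auto
  ultimately show ?thesis
    using that[of "A * K * K"] nonneg by (simp add: admissible_weight_def)
qed

section \<open>A superlinear admissible weight\<close>

primrec slow_minorant :: "(nat \<Rightarrow> real) \<Rightarrow> nat \<Rightarrow> real" where
  "slow_minorant h 0 = 1"
| "slow_minorant h (Suc i) = min (h (Suc i)) (slow_minorant h i + 1 / real (Suc i))"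

context
  fixes h :: "nat \<Rightarrow> real"
  assumes ge_one: "\<And>i. 1 \<le> h i" and mono: "incseq h"
begin

lemma slow_minorant_ge_one: "1 \<le> slow_minorant h i"
proof (induction i)
  case (Suc i)
  then show ?case using ge_one[of "Suc i"] by (simp add: add_increasing2)
qed simp

lemma slow_minorant_le: "slow_minorant h i \<le> h i"
  by (cases i) (use ge_one in auto)

lemma slow_minorant_mono: "incseq (slow_minorant h)"
proof (rule incseq_SucI)
  show "slow_minorant h i \<le> slow_minorant h (Suc i)" for i
    using slow_minorant_le[of i] mono[THEN incseqD, of i "Suc i"] by simp
qed

lemma slow_minorant_unbounded:
  assumes "filterlim h at_top sequentially"
  shows "filterlim (slow_minorant h) at_top sequentially"
  unfolding filterlim_at_top eventually_sequentially
proof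
  fix M :: real
  obtain K0 where K0: "\<And>i. i \<ge> K0 \<Longrightarrow> M \<le> h i"
    using assms by (auto simp: filterlim_at_top eventually_sequentially)
  text \<open>Beyond \<open>K0\<close> the minorant follows the harmonic series until it reaches \<open>M\<close>.\<close>
  have harmonic: "min M (slow_minorant h K0 + (harm (K0 + d) - harm K0)) \<le> slow_minorant h (K0 + d)"
    for d
  proof (induction d)
    case (Suc d)
    define \<iota> where "\<iota> = 1 / real (Suc (K0 + d))"
    define X where "X = slow_minorant h K0 + (harm (K0 + d) - harm K0)"
    have "harm (K0 + Suc d) = harm (K0 + d) + \<iota>"
      by (simp add: harm_Suc \<iota>_def field_simps)
    then have "min M (slow_minorant h K0 + (harm (K0 + Suc d) - harm K0)) = min M (X + \<iota>)"
      by (simp add: X_def)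
    moreover have "\<iota> \<ge> 0" by (simp add: \<iota>_def)
    then have "min M (X + \<iota>) \<le> min M X + \<iota>" by (simp add: min_def)
    ultimately have "min M (slow_minorant h K0 + (harm (K0 + Suc d) - harm K0)) \<le> min M X + \<iota>"
      by simp
    also have "\<dots> \<le> slow_minorant h (K0 + d) + \<iota>" using Suc by (simp add: X_def)
    finally show ?case
      using K0[of "Suc (K0 + d)"] by (simp add: \<iota>_def)
  qed simp
  obtain K1 where K1: "\<And>n. n \<ge> K1 \<Longrightarrow> M + harm K0 \<le> (harm n :: real)"
    using harm_at_top by (auto simp: filterlim_at_top eventually_sequentially)
  show "\<exists>N. \<forall>i\<ge>N. M \<le> slow_minorant h i"
  proof (intro exI allI impI)
    fix i assume "max K0 K1 \<le> i"
    then obtain d where "i = K0 + d" "M + harm K0 \<le> harm (K0 + d)"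
      using K1 by (metis le_Suc_ex max.boundedE)
    then show "M \<le> slow_minorant h i"
      using harmonic[of d] slow_minorant_ge_one[of K0] by (simp add: min_def split: if_splits)
  qed
qed

end

lemma diff_div_sqrt_le:
  fixes p q :: real
  assumes "0 < q" "q \<le> p"
  shows "(p - q) / sqrt p \<le> 2 * (sqrt p - sqrt q)"
proof -
  have "p - q = (sqrt p - sqrt q) * (sqrt p + sqrt q)"
    using assms by (simp add: algebra_simps)
  moreover have "(sqrt p + sqrt q) / sqrt p \<le> 2"
    using assms by (simp add: field_simps)
  ultimately show ?thesis
    using assms mult_left_mono[of "(sqrt p + sqrt q) / sqrt p" 2 "sqrt p - sqrt q"]
    by (simp add: mult.commute)
qed

text \<open>A de la Vallee Poussin type lemma: with the tails \<open>\<rho>\<^sub>n \<ge> \<Sum>\<^sub>k\<^sub>\<ge>\<^sub>n c\<^sub>k\<close>,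
  the multiplier \<open>h\<^sub>n = sqrt (\<rho>\<^sub>0 / \<rho>\<^sub>n)\<close> is unbounded while
  \<open>c\<^sub>n h\<^sub>n \<le> 2 sqrt \<rho>\<^sub>0 (sqrt \<rho>\<^sub>n - sqrt \<rho>\<^sub>n\<^sub>+\<^sub>1)\<close> telescopes.\<close>
lemma summable_unbounded_multiplier:
  fixes c :: "nat \<Rightarrow> real"
  assumes nonneg: "\<And>i. 0 \<le> c i" and "summable c"
  obtains h where "\<And>i. 1 \<le> h i" "incseq h" "filterlim h at_top sequentially"
    "summable (\<lambda>i. c i * h i)"
proof -
  define \<rho> where "\<rho> n = (\<Sum>k. c (k + n)) + (1/2)^n" for n
  have tail: "summable (\<lambda>k. c (k + n))" for n
    using summable_ignore_initial_segment[OF \<open>summable c\<close>] .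
  have \<rho>_pos: "\<rho> n > 0" for n
    unfolding \<rho>_def using tail nonneg by (intro add_nonneg_pos suminf_nonneg) auto
  have \<rho>_step: "\<rho> n - \<rho> (Suc n) \<ge> c n" for n
    using suminf_split_head[OF tail[of n]]
      by (simp add: \<rho>_def add.commute[of _ "Suc n"] add.commute[of _ n])
  then have \<rho>_dec: "decseq \<rho>"
    using nonneg by (intro decseq_SucI) (smt (verit))
  have "\<rho> \<longlonglongrightarrow> 0 + 0"
    unfolding \<rho>_def by (intro tendsto_add suminf_exist_split2 \<open>summable c\<close> LIMSEQ_power_zero) simp
  then have \<rho>_lim: "\<rho> \<longlonglongrightarrow> 0" by simp
  define h where "h n = sqrt (\<rho> 0 / \<rho> n)" for n
  show ?thesis
  proof
    show h_ge_one: "1 \<le> h i" for i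
      unfolding h_def using \<rho>_pos[of i] decseqD[OF \<rho>_dec, of 0 i] by simp
    show "incseq h"
      unfolding h_def incseq_def using \<rho>_pos \<rho>_dec[THEN decseqD]
      by (auto intro!: real_sqrt_le_mono divide_left_mono less_imp_le[OF \<rho>_pos])
    have "filterlim (\<lambda>n. \<rho> 0 / \<rho> n) at_top sequentially"
      using \<rho>_pos by (intro LIM_at_top_divide[OF tendsto_const _ \<rho>_lim] always_eventually) auto
    then show "filterlim h at_top sequentially"
      unfolding h_def by (rule filterlim_compose[OF sqrt_at_top])
    have telescoping: "c i * h i \<le> 2 * sqrt (\<rho> 0) * (sqrt (\<rho> i) - sqrt (\<rho> (Suc i)))" for i
    proof -
      have "c i * h i = c i / sqrt (\<rho> i) * sqrt (\<rho> 0)"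
        unfolding h_def by (simp add: real_sqrt_divide)
      also have "\<dots> \<le> (\<rho> i - \<rho> (Suc i)) / sqrt (\<rho> i) * sqrt (\<rho> 0)"
        using \<rho>_step[of i] less_imp_le[OF \<rho>_pos] by (intro mult_right_mono divide_right_mono) auto
      also have "\<dots> \<le> 2 * (sqrt (\<rho> i) - sqrt (\<rho> (Suc i))) * sqrt (\<rho> 0)"
        using diff_div_sqrt_le[of "\<rho> (Suc i)" "\<rho> i"] less_imp_le[OF \<rho>_pos] \<rho>_pos
          decseqD[OF \<rho>_dec, of i "Suc i"]
        by (intro mult_right_mono) auto
      finally show ?thesis by (simp add: algebra_simps)
    qed
    have partial_sums: "(\<Sum>i<n. c i * h i) \<le> 2 * \<rho> 0" for n
    proof -
      have "(\<Sum>i<n. c i * h i) \<le> (\<Sum>i<n. 2 * sqrt (\<rho> 0) * (sqrt (\<rho> i) - sqrt (\<rho> (Suc i))))"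
        by (intro sum_mono telescoping)
      also have "\<dots> = 2 * sqrt (\<rho> 0) * (sqrt (\<rho> 0) - sqrt (\<rho> n))"
        using sum_lessThan_telescope'[of "\<lambda>i. sqrt (\<rho> i)" n]
          by (simp add: sum_distrib_left[symmetric])
      also have "\<dots> \<le> 2 * sqrt (\<rho> 0) * sqrt (\<rho> 0)"
        using \<rho>_pos[of n] \<rho>_pos[of 0] by (intro mult_left_mono) auto
      also have "\<dots> = 2 * \<rho> 0" using \<rho>_pos[of 0] by (simp add: mult.assoc)
      finally show ?thesis .
    qed
    show "summable (\<lambda>i. c i * h i)"
    proof (rule bounded_imp_summable)
      show "0 \<le> c i * h i" for i using nonneg[of i] h_ge_one[of i] by simp
      show "(\<Sum>i\<le>n. c i * h i) \<le> 2 * \<rho> 0" for n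
        using partial_sums[of "Suc n"] by (simp add: lessThan_Suc_atMost)
    qed
  qed
qed

lemma summable_on_atLeast1_iff_summable:
  fixes f :: "nat \<Rightarrow> real"
  assumes "\<And>i. i \<ge> 1 \<Longrightarrow> 0 \<le> f i"
  shows "f summable_on {1..} \<longleftrightarrow> summable (\<lambda>i. if i \<ge> 1 then f i else 0)"
proof -
  have "f summable_on {1..} \<longleftrightarrow> (\<lambda>i. if i \<ge> 1 then f i else 0) summable_on UNIV"
    by (rule summable_on_cong_neutral) auto
  also have "\<dots> \<longleftrightarrow> summable (\<lambda>i. if i \<ge> 1 then f i else 0)"
    using assms by (intro summable_on_UNIV_nonneg_real_iff) auto
  finally show ?thesis .
qed

text \<open>Since \<open>s\<^sub>i\<^sub>+\<^sub>1 - s\<^sub>i \<le> 1/(i+1)\<close>, the increments of \<open>i\<^sup>\<alpha> s\<^sub>i\<close> stay below \<open>2 s\<^sub>i\<close>.\<close>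
lemma admissible_weight_powr_mult:
  assumes \<alpha>: "0 \<le> \<alpha>" "\<alpha> \<le> 1"
    and a: "\<And>i. i \<ge> 1 \<Longrightarrow> 0 \<le> a i \<and> a i \<le> A * real i powr \<alpha>"
    and s: "\<And>i. 1 \<le> s i" "incseq s" "\<And>i. s (Suc i) \<le> s i + 1 / real (Suc i)"
  shows "admissible_weight a (2 * A) (\<lambda>i. real i powr \<alpha> * s i)"
  unfolding admissible_weight_def
proof (intro allI impI conjI)
  fix i :: nat assume i: "i \<ge> 1"
  define g where "g i = real i powr \<alpha> * s i" for i
  have p: "1 \<le> real i powr \<alpha>" "real i powr \<alpha> \<le> real (i + 1) powr \<alpha>"
    using \<alpha> i by (simp_all add: ge_one_powr_ge_zero powr_mono2)
  show "0 \<le> real i powr \<alpha> * s i" using p s(1)[of i] by simp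
  show "real i powr \<alpha> * s i \<le> real (i + 1) powr \<alpha> * s (i + 1)"
    using p s(1)[of i] incseqD[OF s(2), of i "i + 1"] by (intro mult_mono) auto
  have "g (i + 1) \<le> (real i powr \<alpha> + 1) * (s i + 1 / real (Suc i))"
    unfolding g_def using powr_Suc_le_add_one[OF \<alpha> i] s(1)[of "Suc i"] s(3)[of i]
    by (intro mult_mono) auto
  also have "\<dots> = g i + s i + (real i powr \<alpha> + 1) / real (Suc i)"
    by (simp add: g_def algebra_simps add_divide_distrib)
  also have "(real i powr \<alpha> + 1) / real (Suc i) \<le> 1"
    using powr_mono[of \<alpha> 1 "real i"] \<alpha> i by simp
  finally have "g (i + 1) - g i \<le> 2 * s i"
    using s(1)[of i] by simp
  then have "(g (i + 1) - g i) * a i \<le> (2 * s i) * (A * real i powr \<alpha>)"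
    using a[OF i] s(1)[of i] by (intro mult_mono) auto
  then show "(real (i + 1) powr \<alpha> * s (i + 1) - real i powr \<alpha> * s i) * a i
      \<le> 2 * A * (real i powr \<alpha> * s i)"
    by (simp add: g_def mult_ac)
qed

lemma superlinear_admissible_weight:
  fixes a c :: "nat \<Rightarrow> real"
  assumes \<alpha>: "0 \<le> \<alpha>" "\<alpha> \<le> 1"
    and a: "\<And>i. i \<ge> 1 \<Longrightarrow> 0 \<le> a i \<and> a i \<le> A * real i powr \<alpha>"
    and c: "\<And>i. i \<ge> 1 \<Longrightarrow> 0 \<le> c i"
    and summable: "(\<lambda>i. real i powr \<alpha> * c i) summable_on {1..}"
  obtains g where "admissible_weight a (2 * A) g"
    "\<And>i. i \<ge> 1 \<Longrightarrow> real i powr \<alpha> \<le> g i"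
    "(\<lambda>i. g i * c i) summable_on {1..}"
    "\<And>M. eventually (\<lambda>i. M * real i powr \<alpha> \<le> g i) sequentially"
proof -
  define c' where "c' i = (if i \<ge> 1 then real i powr \<alpha> * c i else 0)" for i
  have c': "0 \<le> c' i" for i unfolding c'_def using c by simp
  have "summable c'"
    using summable summable_on_atLeast1_iff_summable[of "\<lambda>i. real i powr \<alpha> * c i"] c
    by (simp add: c'_def[abs_def])
  obtain h where h: "\<And>i. 1 \<le> h i" "incseq h" "filterlim h at_top sequentially"
    and "summable (\<lambda>i. c' i * h i)"
    using summable_unbounded_multiplier[OF c' \<open>summable c'\<close>] by metis
  define s where "s = slow_minorant h"
  have s: "\<And>i. 1 \<le> s i" "\<And>i. s i \<le> h i" "incseq s" "filterlim s at_top sequentially"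
    "\<And>i. s (Suc i) \<le> s i + 1 / real (Suc i)"
    unfolding s_def
    using slow_minorant_ge_one[OF h(1,2)] slow_minorant_le[OF h(1,2)] slow_minorant_mono[OF h(1,2)]
      slow_minorant_unbounded[OF h(1,2,3)] by auto
  define g where "g i = real i powr \<alpha> * s i" for i
  show ?thesis
  proof
    show "admissible_weight a (2 * A) g"
      unfolding g_def using admissible_weight_powr_mult[OF \<alpha> a s(1,3,5)] by simp
    show "real i powr \<alpha> \<le> g i" if "i \<ge> 1" for i
      unfolding g_def using s(1)[of i] mult_left_mono[of 1 "s i" "real i powr \<alpha>"] by simp
    have "summable (\<lambda>i. c' i * s i)"
    proof (rule summable_comparison_test'[OF \<open>summable (\<lambda>i. c' i * h i)\<close>])
      show "norm (c' i * s i) \<le> c' i * h i" for i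
        using c'[of i] s(1)[of i] s(2)[of i] by (simp add: mult_left_mono)
    qed
    moreover have "(\<lambda>i. if i \<ge> 1 then g i * c i else 0) = (\<lambda>i. c' i * s i)"
      by (auto simp: g_def c'_def)
    moreover have "0 \<le> g i * c i" if "i \<ge> 1" for i
      using c[OF that] s(1)[of i] by (simp add: g_def)
    ultimately show "(\<lambda>i. g i * c i) summable_on {1..}"
      using summable_on_atLeast1_iff_summable[of "\<lambda>i. g i * c i"] by simp
    show "eventually (\<lambda>i. M * real i powr \<alpha> \<le> g i) sequentially" for M
    proof (rule eventually_mono)
      show "eventually (\<lambda>i. M \<le> s i) sequentially"
        using s(4) by (simp add: filterlim_at_top)
      show "M * real i powr \<alpha> \<le> g i" if "M \<le> s i" for i
        using mult_right_mono[OF that, of "real i powr \<alpha>"] by (simp add: g_def mult.commute)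
    qed
  qed
qed

lemma sum_weighted_diff_by_parts:
  fixes w f :: "nat \<Rightarrow> real"
  assumes "N \<ge> 1"
  shows "(\<Sum>i\<in>{2..N}. w i * (f (i-1) - f i))
    = w 2 * f 1 + (\<Sum>i\<in>{2..N}. (w (i+1) - w i) * f i) - w (N+1) * f N"
  using assms
proof (induction N rule: nat_induct_at_least)
  case base
  then show ?case by (simp add: numeral_2_eq_2)
next
  case (Suc N)
  then have "{2..Suc N} = insert (Suc N) {2..N}" by auto
  then show ?case using Suc by (simp add: algebra_simps)
qed

lemma bounded_family_convergent_subseq:
  fixes X :: "nat \<Rightarrow> nat \<Rightarrow> real"
  assumes B: "\<And>k. \<exists>B. \<forall>n. \<bar>X k n\<bar> \<le> B"
  shows "\<exists>r. strict_mono r \<and> (\<forall>k. convergent (\<lambda>n. X k (r n)))"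
proof -
  interpret subseqs "\<lambda>k s. convergent (\<lambda>n. X k (s n))"
  proof
    fix k and s :: "nat \<Rightarrow> nat" assume "strict_mono s"
    obtain f where f: "strict_mono f" "monoseq (\<lambda>n. X k (s (f n)))"
      using seq_monosub[of "\<lambda>n. X k (s n)"] by blast
    obtain Bk where Bk: "\<forall>n. \<bar>X k n\<bar> \<le> Bk" using B by blast
    have "Bseq (\<lambda>n. X k (s (f n)))" using Bk by (intro BseqI'[of _ Bk]) auto
    then have "convergent (\<lambda>n. X k (s (f n)))" using f(2) by (rule Bseq_monoseq_convergent)
    then show "\<exists>r'. strict_mono r' \<and> convergent (\<lambda>n. X k ((s \<circ> r') n))" using f(1) by auto
  qed
  have "convergent (\<lambda>n. X k (diagseq n))" for k
  proof -
    have "convergent (\<lambda>n. X k ((diagseq \<circ> (+) (Suc k)) n))"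
    proof (rule diagseq_holds)
      fix r s n assume r: "strict_mono (r :: nat \<Rightarrow> nat)" and c: "convergent (\<lambda>m. X n (s m))"
      then obtain L where "(\<lambda>m. X n (s m)) \<longlonglongrightarrow> L" by (auto simp: convergent_def)
      then have "((\<lambda>m. X n (s m)) \<circ> r) \<longlonglongrightarrow> L" using r by (rule LIMSEQ_subseq_LIMSEQ)
      then show "convergent (\<lambda>m. X n ((s \<circ> r) m))" by (auto simp: convergent_def o_def)
    qed
    then obtain L where "(\<lambda>n. X k (diagseq (Suc k + n))) \<longlonglongrightarrow> L" by (auto simp: convergent_def)
    then have "(\<lambda>n. X k (diagseq (n + Suc k))) \<longlonglongrightarrow> L" by (simp add: add.commute)
    then have "(\<lambda>n. X k (diagseq n)) \<longlonglongrightarrow> L" by (rule LIMSEQ_offset)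
    then show ?thesis by (auto simp: convergent_def)
  qed
  then show ?thesis using subseq_diagseq by blast
qed

lemma nonneg_bounded_summable_on:
  fixes f :: "'a \<Rightarrow> real"
  assumes nn: "\<And>x. x \<in> A \<Longrightarrow> 0 \<le> f x" and b: "\<And>F. finite F \<Longrightarrow> F \<subseteq> A \<Longrightarrow> sum f F \<le> M"
  shows "f summable_on A" "infsum f A \<le> M"
proof -
  have "bdd_above (sum f ` {F. F \<subseteq> A \<and> finite F})"
    using b by (intro bdd_aboveI[of _ M]) auto
  then show s: "f summable_on A" using nn by (intro nonneg_bdd_above_summable_on) auto
  show "infsum f A \<le> M" using s b by (rule infsum_le_finite_sums)
qed

lemma infsum_diff_real:
  fixes f g :: "'a \<Rightarrow> real"
  assumes "f summable_on A" "g summable_on A"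
  shows "infsum (\<lambda>x. f x - g x) A = infsum f A - infsum g A"
proof -
  have "(\<lambda>x. - g x) summable_on A" using assms(2) by (simp add: summable_on_uminus)
  then have "infsum (\<lambda>x. f x + - g x) A = infsum f A + infsum (\<lambda>x. - g x) A"
    using assms(1) by (intro infsum_add) auto
  then show ?thesis by (simp add: infsum_uminus)
qed

lemma abs_mult_diff_le:
  fixes x1 y1 x2 y2 R :: real
  assumes "\<bar>x1\<bar> \<le> R" "\<bar>y2\<bar> \<le> R"
  shows "\<bar>x1 * y1 - x2 * y2\<bar> \<le> R * (\<bar>x1 - x2\<bar> + \<bar>y1 - y2\<bar>)"
proof -
  have "x1 * y1 - x2 * y2 = x1 * (y1 - y2) + (x1 - x2) * y2" by (simp add: algebra_simps)
  then have "\<bar>x1 * y1 - x2 * y2\<bar> \<le> \<bar>x1\<bar> * \<bar>y1 - y2\<bar> + \<bar>x1 - x2\<bar> * \<bar>y2\<bar>"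
    by (metis abs_mult abs_triangle_ineq)
  also have "\<dots> \<le> R * \<bar>y1 - y2\<bar> + \<bar>x1 - x2\<bar> * R"
    using assms by (intro add_mono mult_mono) auto
  finally show ?thesis by (simp add: algebra_simps)
qed

lemma abs_four_terms_le:
  fixes p q r s x y z w :: real
  assumes "0 \<le> p" "0 \<le> q" "0 \<le> r" "0 \<le> s"
  shows "\<bar>p * x - q * y - r * z + s * w\<bar> \<le> p * \<bar>x\<bar> + q * \<bar>y\<bar> + r * \<bar>z\<bar> + s * \<bar>w\<bar>"
proof -
  have "\<bar>p * x - q * y - r * z + s * w\<bar> \<le> \<bar>p * x - q * y - r * z\<bar> + \<bar>s * w\<bar>"
    by (rule abs_triangle_ineq)
  also have "\<bar>p * x - q * y - r * z\<bar> \<le> \<bar>p * x - q * y\<bar> + \<bar>r * z\<bar>" by (rule abs_triangle_ineq4)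
  also have "\<bar>p * x - q * y\<bar> \<le> \<bar>p * x\<bar> + \<bar>q * y\<bar>" by (rule abs_triangle_ineq4)
  finally show ?thesis using assms by (simp add: abs_mult)
qed

lemma continuous_on_from_within_halfline:
  fixes f :: "real \<Rightarrow> real"
  assumes "\<And>x. 0 \<le> x \<Longrightarrow> (f \<longlongrightarrow> f x) (at x within {0..})"
  shows "continuous_on {0..t} f"
  unfolding continuous_on_eq_continuous_within continuous_within
proof
  fix x assume x: "x \<in> {0..t}"
  then have "(f \<longlongrightarrow> f x) (at x within {0..})" using assms by simp
  then show "(f \<longlongrightarrow> f x) (at x within {0..t})" by (rule tendsto_within_subset) auto
qed

lemma floor_divide_approx:
  fixes t :: real
  assumes "0 \<le> t"
  shows "real (nat \<lfloor>t * real (Suc q)\<rfloor>) / real (Suc q) \<le> t"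
    and "t - real (nat \<lfloor>t * real (Suc q)\<rfloor>) / real (Suc q) < 1 / real (Suc q)"
proof -
  have p: "real (nat \<lfloor>t * real (Suc q)\<rfloor>) = of_int \<lfloor>t * real (Suc q)\<rfloor>"
    using assms by simp
  show "real (nat \<lfloor>t * real (Suc q)\<rfloor>) / real (Suc q) \<le> t"
    unfolding p by (simp add: divide_le_eq)
  have "t - of_int \<lfloor>t * real (Suc q)\<rfloor> / real (Suc q)
      = (t * real (Suc q) - of_int \<lfloor>t * real (Suc q)\<rfloor>) / real (Suc q)"
    by (simp add: field_simps)
  also have "\<dots> < 1 / real (Suc q)"
    by (intro divide_strict_right_mono) linarith+
  finally show "t - real (nat \<lfloor>t * real (Suc q)\<rfloor>) / real (Suc q) < 1 / real (Suc q)"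
    unfolding p .
qed

lemma tail_factor_small:
  fixes x y e :: real
  assumes "0 \<le> x" "0 \<le> y" "0 < e"
  shows "x * (y / ((x + 1) * (y + 1) / e)) < e"
proof -
  have "x * y < (x + 1) * (y + 1)" using assms by (simp add: algebra_simps)
  then have "x * y / ((x + 1) * (y + 1)) * e < e"
    using assms by (simp add: divide_less_eq)
  moreover have "x * (y / ((x + 1) * (y + 1) / e)) = x * y / ((x + 1) * (y + 1)) * e"
    using assms by (simp add: field_simps)
  ultimately show ?thesis by simp
qed

section \<open>The truncated explicit Euler scheme\<close>

locale euler_scheme =
  fixes \<alpha> lam A Kg :: real and a b c0 g :: "nat \<Rightarrow> real"
  assumes alpha_nonneg: "0 \<le> \<alpha>" and alpha_le_1: "\<alpha> \<le> 1"
    and lam_nonneg: "0 \<le> lam" and A_nonneg: "0 \<le> A"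
    and a_nonneg: "\<And>i. i \<ge> 1 \<Longrightarrow> 0 \<le> a i"
    and a_le: "\<And>i. i \<ge> 1 \<Longrightarrow> a i \<le> A * real i powr \<alpha>"
    and b_nonneg: "\<And>i. i \<ge> 1 \<Longrightarrow> 0 \<le> b i"
    and c0_nonneg: "\<And>i. i \<ge> 1 \<Longrightarrow> 0 \<le> c0 i"
    and g_admissible: "admissible_weight a Kg g" and Kg_nonneg: "0 \<le> Kg"
    and g_ge_powr: "\<And>i. i \<ge> 1 \<Longrightarrow> real i powr \<alpha> \<le> g i"
    and g_c0_summable: "(\<lambda>i. g i * c0 i) summable_on {1..}"
    and g_superlinear: "\<And>M. eventually (\<lambda>i. M * real i powr \<alpha> \<le> g i) sequentially"
begin

definition G0 :: real where "G0 = (\<Sum>\<^sub>\<infinity>i\<in>{1..}. g i * c0 i)"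

lemma g_ge_1: "i \<ge> 1 \<Longrightarrow> 1 \<le> g i"
  using g_ge_powr[of i] ge_one_powr_ge_zero[of "real i" \<alpha>] alpha_nonneg by simp

lemma g_c0_nonneg: "i \<ge> 1 \<Longrightarrow> 0 \<le> g i * c0 i"
  using g_ge_1[of i] c0_nonneg[of i] by simp

lemma g_c0_partial_le: "(\<Sum>i\<in>F. g i * c0 i) \<le> G0" if "finite F" "F \<subseteq> {1..}"
  unfolding G0_def using that g_c0_nonneg
  by (intro finite_sum_le_infsum[OF g_c0_summable]) auto

lemma a_le_g: "i \<ge> 1 \<Longrightarrow> a i \<le> A * g i"
  using a_le[of i] g_ge_powr[of i] A_nonneg by (meson mult_left_mono order_trans)

lemma abs_a_mult_le: "i \<ge> 1 \<Longrightarrow> \<bar>a i * x\<bar> \<le> A * (real i powr \<alpha> * \<bar>x\<bar>)"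
  using a_le[of i] a_nonneg[of i] mult_right_mono[of "a i" "A * real i powr \<alpha>" "\<bar>x\<bar>"]
  by (simp add: abs_mult mult.assoc)

text \<open>The system truncated at size \<open>N\<close>: no flux leaves size \<open>N\<close>, and the first equation only
  sums over sizes up to \<open>N\<close>.\<close>
definition flux_tr :: "nat \<Rightarrow> (nat \<Rightarrow> real) \<Rightarrow> nat \<Rightarrow> real" where
  "flux_tr N y i = (if i < N then a i * y 1 * y i - b (i+1) * y (i+1) else 0)"

definition rhs_tr :: "nat \<Rightarrow> (nat \<Rightarrow> real) \<Rightarrow> nat \<Rightarrow> real" where
  "rhs_tr N y i = (if i = 1 \<and> 1 \<le> N then lam - y 1 * ((\<Sum>j\<in>{1..N}. a j * y j) + a 1 * y 1)
     else if 2 \<le> i \<and> i \<le> N then flux_tr N y (i-1) - flux_tr N y i else 0)"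

text \<open>A priori bounds for the scheme up to time \<open>N\<close>: \<open>C\<^sub>1\<close> only gains mass through \<open>lam\<close>, and
  the mass in sizes \<open>\<ge> 2\<close> only through \<open>J\<^sub>1 \<le> a\<^sub>1 C\<^sub>1\<^sup>2\<close>. While they hold, \<open>stiffness N\<close>
  bounds the loss rate of every component, so steps shorter than \<open>1 / stiffness N\<close> keep the
  explicit scheme nonnegative; the step also tends to \<open>0\<close> as \<open>N\<close> grows.\<close>
definition C1_bound :: "real \<Rightarrow> real" where
  "C1_bound t = c0 1 + lam * t"

definition mass_bound :: "real \<Rightarrow> real" where
  "mass_bound t = G0 + a 1 * (C1_bound t)\<^sup>2 * t"

definition stiffness :: "nat \<Rightarrow> real" where
  "stiffness N = (\<Sum>j\<in>{1..N}. a j) * (C1_bound (real N) + mass_bound (real N))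
     + (\<Sum>j\<in>{1..N}. a j) * C1_bound (real N) + (\<Sum>j\<in>{1..N+1}. b j)"

definition step :: "nat \<Rightarrow> real" where
  "step N = 1 / (real N + 1 + stiffness N)"

definition init_tr :: "nat \<Rightarrow> nat \<Rightarrow> real" where
  "init_tr N i = (if 1 \<le> i \<and> i \<le> N then c0 i else 0)"

definition euler_step :: "nat \<Rightarrow> (nat \<Rightarrow> real) \<Rightarrow> nat \<Rightarrow> real" where
  "euler_step N y i = y i + step N * rhs_tr N y i"

definition euler :: "nat \<Rightarrow> nat \<Rightarrow> nat \<Rightarrow> real" where
  "euler N n = (euler_step N ^^ n) (init_tr N)"

lemma euler_0: "euler N 0 = init_tr N"
  by (simp add: euler_def)

lemma euler_Suc: "euler N (Suc n) i = euler N n i + step N * rhs_tr N (euler N n) i"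
  by (simp add: euler_def euler_step_def)

lemma G0_nonneg: "0 \<le> G0"
  unfolding G0_def using g_c0_nonneg by (intro infsum_nonneg) auto

lemma a1_nonneg: "0 \<le> a 1"
  using a_nonneg by simp

lemma a1_le: "a 1 \<le> A"
  using a_le[of 1] by simp

lemma c0_1_nonneg: "0 \<le> c0 1"
  using c0_nonneg by simp

lemma C1_bound_nonneg: "t \<ge> 0 \<Longrightarrow> 0 \<le> C1_bound t"
  unfolding C1_bound_def using lam_nonneg c0_1_nonneg by simp

lemma C1_bound_mono: "s \<le> t \<Longrightarrow> C1_bound s \<le> C1_bound t"
  unfolding C1_bound_def using lam_nonneg by (simp add: mult_left_mono)

lemma mass_bound_nonneg: "t \<ge> 0 \<Longrightarrow> 0 \<le> mass_bound t"
  unfolding mass_bound_def using G0_nonneg a1_nonneg by simp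

lemma mass_bound_mono:
  assumes "0 \<le> s" "s \<le> t"
  shows "mass_bound s \<le> mass_bound t"
proof -
  have "(C1_bound s)\<^sup>2 \<le> (C1_bound t)\<^sup>2"
    using C1_bound_nonneg C1_bound_mono assms by (intro power_mono) auto
  then have "(C1_bound s)\<^sup>2 * s \<le> (C1_bound t)\<^sup>2 * t" using assms by (intro mult_mono) auto
  then show ?thesis unfolding mass_bound_def using a1_nonneg
    by (simp add: mult.assoc mult_left_mono)
qed

lemma mass_bound_step:
  assumes "0 \<le> t" "0 \<le> h"
  shows "mass_bound t + h * (a 1 * (C1_bound (t+h))\<^sup>2) \<le> mass_bound (t + h)"
proof -
  have "(C1_bound t)\<^sup>2 \<le> (C1_bound (t+h))\<^sup>2"
    using C1_bound_nonneg C1_bound_mono assms by (intro power_mono) auto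
  then have "a 1 * ((C1_bound t)\<^sup>2 * t) \<le> a 1 * ((C1_bound (t+h))\<^sup>2 * t)"
    using assms a1_nonneg by (intro mult_left_mono mult_right_mono) auto
  then show ?thesis unfolding mass_bound_def by (simp add: algebra_simps)
qed

lemma sum_a_nonneg: "0 \<le> (\<Sum>j\<in>{1..N}. a j)"
  using a_nonneg by (intro sum_nonneg) auto

lemma sum_b_nonneg: "0 \<le> (\<Sum>j\<in>{1..N}. b j)"
  using b_nonneg by (intro sum_nonneg) auto

lemma stiffness_nonneg: "0 \<le> stiffness N"
  unfolding stiffness_def
  using sum_a_nonneg[of N] sum_b_nonneg[of "N+1"] C1_bound_nonneg[of "real N"] mass_bound_nonneg[of "real N"]
  by (intro add_nonneg_nonneg mult_nonneg_nonneg) (simp_all del: sum.cl_ivl_Suc)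

lemma step_pos: "0 < step N"
  unfolding step_def using stiffness_nonneg[of N] by simp

lemma step_le: "step N \<le> 1 / (real N + 1)"
  unfolding step_def using stiffness_nonneg[of N] by (intro divide_left_mono) auto

lemma step_le_1: "step N \<le> 1"
proof -
  have "1 / (real N + 1) \<le> 1" by (simp add: field_simps)
  then show ?thesis using step_le[of N] by linarith
qed

lemma step_stiffness_le_1: "step N * stiffness N \<le> 1"
  unfolding step_def using stiffness_nonneg[of N] by (simp add: divide_le_eq)

lemma euler_outside: "i = 0 \<or> N < i \<Longrightarrow> euler N n i = 0"
  by (induction n) (auto simp: euler_0 euler_Suc init_tr_def rhs_tr_def)

lemma flux_tr_le:
  assumes "\<forall>j. 0 \<le> y j" "i \<ge> 1"
  shows "flux_tr N y i \<le> a i * y 1 * y i"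
  using assms a_nonneg[of i] b_nonneg[of "i+1"] by (simp add: flux_tr_def)

lemma flux_tr_ge:
  assumes "\<forall>j. 0 \<le> y j" "i \<ge> 1"
  shows "- (b (i+1) * y (i+1)) \<le> flux_tr N y i"
  using assms a_nonneg[of i] b_nonneg[of "i+1"] by (simp add: flux_tr_def)

lemma rhs_tr_mid: "2 \<le> i \<Longrightarrow> i \<le> N \<Longrightarrow> rhs_tr N y i = flux_tr N y (i-1) - flux_tr N y i"
  unfolding rhs_tr_def by auto

lemma rhs_tr_weighted_sum:
  assumes "N \<ge> 1"
  shows "(\<Sum>i\<in>{2..N}. w i * rhs_tr N y i)
    = w 2 * flux_tr N y 1 + (\<Sum>i\<in>{2..N}. (w (i+1) - w i) * flux_tr N y i)"
proof -
  have "(\<Sum>i\<in>{2..N}. w i * rhs_tr N y i) = (\<Sum>i\<in>{2..N}. w i * (flux_tr N y (i-1) - flux_tr N y i))"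
    by (intro sum.cong) (auto simp: rhs_tr_mid)
  also have "\<dots> = w 2 * flux_tr N y 1 + (\<Sum>i\<in>{2..N}. (w (i+1) - w i) * flux_tr N y i)
      - w (N+1) * flux_tr N y N"
    by (rule sum_weighted_diff_by_parts[OF assms])
  finally show ?thesis by (simp add: flux_tr_def)
qed

lemma rhs_tr_sum: "N \<ge> 1 \<Longrightarrow> (\<Sum>i\<in>{2..N}. rhs_tr N y i) = flux_tr N y 1"
  using rhs_tr_weighted_sum[of N "\<lambda>_. 1" y] by simp

lemma rhs_tr_mid_eq: "2 \<le> i \<Longrightarrow> i + 1 \<le> N \<Longrightarrow>
   rhs_tr N y i = a (i-1) * (y 1 * y (i-1)) - b i * y i - a i * (y 1 * y i) + b (i+1) * y (i+1)"
proof -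
  assume i: "2 \<le> i" "i + 1 \<le> N"
  then have "i - 1 < N" "i < N" "i - 1 + 1 = i" "i \<noteq> 1" "2 \<le> i \<and> i \<le> N" by auto
  then show ?thesis unfolding rhs_tr_def flux_tr_def by (simp add: algebra_simps)
qed

lemma rhs_tr_1_eq: "1 \<le> N \<Longrightarrow> rhs_tr N y 1 = lam - (y 1 * (\<Sum>j\<in>{1..N}. a j * y j) + a 1 * (y 1 * y 1))"
  unfolding rhs_tr_def by (simp add: algebra_simps)

lemma rhs_tr_eq_flux: "2 \<le> i \<Longrightarrow> i + 1 \<le> N \<Longrightarrow> rhs_tr N y i = flux a b y (i - 1) - flux a b y i"
proof -
  assume "2 \<le> i" "i + 1 \<le> N"
  then have "i - 1 < N" "i < N" "i - 1 + 1 = i" "i \<noteq> 1" "2 \<le> i \<and> i \<le> N" by auto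
  then show ?thesis by (simp add: rhs_tr_def flux_tr_def flux_def)
qed

definition state_bounded :: "nat \<Rightarrow> real \<Rightarrow> (nat \<Rightarrow> real) \<Rightarrow> bool" where
  "state_bounded N t y \<longleftrightarrow> (\<forall>i. 0 \<le> y i) \<and> (\<forall>i. i = 0 \<or> N < i \<longrightarrow> y i = 0) \<and>
     y 1 \<le> C1_bound t \<and> (\<Sum>i\<in>{2..N}. y i) \<le> mass_bound t"

lemma state_bounded_le:
  assumes y: "state_bounded N t y" and t: "0 \<le> t" "t \<le> real N"
  shows "y j \<le> C1_bound (real N) + mass_bound (real N)"
proof -
  have bounds: "C1_bound t \<le> C1_bound (real N)" "mass_bound t \<le> mass_bound (real N)"
    "0 \<le> C1_bound (real N)" "0 \<le> mass_bound (real N)"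
    using t by (auto intro: C1_bound_mono mass_bound_mono C1_bound_nonneg mass_bound_nonneg)
  consider "j = 1" | "2 \<le> j \<and> j \<le> N" | "j = 0 \<or> N < j" by linarith
  then show ?thesis
  proof cases
    case 2
    then have "y j \<le> (\<Sum>i\<in>{2..N}. y i)"
      using y by (intro member_le_sum) (auto simp: state_bounded_def)
    then show ?thesis using y bounds by (simp add: state_bounded_def)
  qed (use y bounds in \<open>auto simp: state_bounded_def\<close>)
qed

lemma step_loss_le_1:
  assumes y: "state_bounded N t y" and t: "0 \<le> t" "t \<le> real N" and "N \<ge> 1"
  shows "step N * ((\<Sum>j\<in>{1..N}. a j * y j) + a 1 * y 1) \<le> 1"
    and "2 \<le> i \<Longrightarrow> i \<le> N \<Longrightarrow> step N * (b i + a i * y 1) \<le> 1"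
proof -
  define Sa where "Sa = (\<Sum>j\<in>{1..N}. a j)"
  define R where "R = C1_bound (real N) + mass_bound (real N)"
  have y_nonneg: "0 \<le> y j" for j using y by (simp add: state_bounded_def)
  have "y 1 \<le> C1_bound (real N)"
    using y t C1_bound_mono[of t "real N"] by (simp add: state_bounded_def)
  then have ay1: "a i * y 1 \<le> Sa * C1_bound (real N)" if "1 \<le> i" "i \<le> N" for i
    unfolding Sa_def using a_nonneg that y_nonneg sum_a_nonneg
    by (intro mult_mono member_le_sum) auto
  have "(\<Sum>j\<in>{1..N}. a j * y j) \<le> Sa * R"
    unfolding Sa_def R_def sum_distrib_right using a_nonneg state_bounded_le[OF y t]
    by (intro sum_mono mult_left_mono) auto
  then have "(\<Sum>j\<in>{1..N}. a j * y j) + a 1 * y 1 \<le> stiffness N"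
    using ay1[of 1] \<open>N \<ge> 1\<close> sum_b_nonneg[of "N + 1"]
    unfolding stiffness_def Sa_def[symmetric] R_def[symmetric] by linarith
  moreover have "b i + a i * y 1 \<le> stiffness N" if "2 \<le> i" "i \<le> N"
  proof -
    have "b i \<le> (\<Sum>j\<in>{1..N+1}. b j)" using b_nonneg that by (intro member_le_sum) auto
    moreover have "0 \<le> Sa * R"
      unfolding Sa_def R_def using sum_a_nonneg C1_bound_nonneg mass_bound_nonneg by simp
    ultimately show ?thesis
      using ay1[of i] that unfolding stiffness_def Sa_def[symmetric] R_def[symmetric] by linarith
  qed
  ultimately show "step N * ((\<Sum>j\<in>{1..N}. a j * y j) + a 1 * y 1) \<le> 1"
    and "2 \<le> i \<Longrightarrow> i \<le> N \<Longrightarrow> step N * (b i + a i * y 1) \<le> 1"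
    using step_stiffness_le_1[of N] mult_left_mono[OF _ less_imp_le[OF step_pos]]
    by (meson order_trans)+
qed

lemma euler_step_nonneg:
  assumes y: "state_bounded N t y" and t: "0 \<le> t" "t \<le> real N"
  shows "0 \<le> y i + step N * rhs_tr N y i"
proof -
  have y_nonneg: "\<forall>j. 0 \<le> y j" using y by (simp add: state_bounded_def)
  consider "i = 1" "N \<ge> 1" | "2 \<le> i \<and> i \<le> N" | "(i = 1 \<and> N = 0) \<or> i = 0 \<or> N < i"
    by linarith
  then show ?thesis
  proof cases
    case 1
    define loss where "loss = (\<Sum>j\<in>{1..N}. a j * y j) + a 1 * y 1"
    have "y 1 + step N * rhs_tr N y 1 = y 1 * (1 - step N * loss) + step N * lam"
      using 1 by (simp add: rhs_tr_def loss_def algebra_simps)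
    moreover have "0 \<le> y 1 * (1 - step N * loss)"
      using step_loss_le_1(1)[OF y t \<open>N \<ge> 1\<close>] y_nonneg by (simp add: loss_def)
    ultimately show ?thesis using 1 step_pos[of N] lam_nonneg by simp
  next
    case 2
    then have N: "N \<ge> 1" and i: "1 \<le> i - 1" "i - 1 + 1 = i" by auto
    have "- (b i * y i) \<le> flux_tr N y (i - 1)"
      using flux_tr_ge[OF y_nonneg i(1), of N] by (simp only: i(2))
    moreover have "flux_tr N y i \<le> a i * y 1 * y i"
      using flux_tr_le[OF y_nonneg, of i N] 2 by simp
    ultimately have "- ((b i + a i * y 1) * y i) \<le> rhs_tr N y i"
      using rhs_tr_mid[of i N y] 2 by (simp add: algebra_simps)
    then have "step N * (- ((b i + a i * y 1) * y i)) \<le> step N * rhs_tr N y i"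
      using step_pos[of N] by (intro mult_left_mono) auto
    then have "y i - step N * ((b i + a i * y 1) * y i) \<le> y i + step N * rhs_tr N y i"
      by simp
    moreover have "0 \<le> y i * (1 - step N * (b i + a i * y 1))"
      using step_loss_le_1(2)[OF y t N, of i] 2 y_nonneg by simp
    ultimately show ?thesis by (simp add: algebra_simps)
  next
    case 3
    then show ?thesis using y_nonneg by (auto simp: rhs_tr_def)
  qed
qed

lemma euler_step_C1_le:
  assumes y: "state_bounded N t y" and "N \<ge> 1"
  shows "y 1 + step N * rhs_tr N y 1 \<le> C1_bound (t + step N)"
proof -
  have y_nonneg: "0 \<le> y j" for j using y by (simp add: state_bounded_def)
  have "0 \<le> step N * (y 1 * ((\<Sum>j\<in>{1..N}. a j * y j) + a 1 * y 1))"
    using step_pos[of N] y_nonneg a_nonneg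
      by (auto intro!: mult_nonneg_nonneg sum_nonneg add_nonneg_nonneg)
  then have "y 1 + step N * rhs_tr N y 1 \<le> y 1 + step N * lam"
    using \<open>N \<ge> 1\<close> by (simp add: rhs_tr_def algebra_simps)
  then show ?thesis
    using y by (simp add: state_bounded_def C1_bound_def algebra_simps)
qed

lemma euler_step_mass_le:
  assumes y: "state_bounded N t y" and "0 \<le> t" "N \<ge> 1"
  shows "(\<Sum>i\<in>{2..N}. y i + step N * rhs_tr N y i) \<le> mass_bound (t + step N)"
proof -
  have y_nonneg: "\<forall>j. 0 \<le> y j" using y by (simp add: state_bounded_def)
  have "y 1 \<le> C1_bound (t + step N)"
    using y C1_bound_mono[of t "t + step N"] step_pos[of N] by (simp add: state_bounded_def)
  then have "(y 1)\<^sup>2 \<le> (C1_bound (t + step N))\<^sup>2"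
    using y_nonneg by (intro power_mono) auto
  then have "flux_tr N y 1 \<le> a 1 * (C1_bound (t + step N))\<^sup>2"
    using flux_tr_le[OF y_nonneg, of 1 N] a1_nonneg mult_left_mono
    by (fastforce simp: power2_eq_square)
  then have "(\<Sum>i\<in>{2..N}. y i) + step N * flux_tr N y 1
      \<le> mass_bound t + step N * (a 1 * (C1_bound (t + step N))\<^sup>2)"
    using y step_pos[of N] by (intro add_mono mult_left_mono) (auto simp: state_bounded_def)
  also have "\<dots> \<le> mass_bound (t + step N)"
    using mass_bound_step[OF \<open>0 \<le> t\<close>, of "step N"] step_pos[of N] by simp
  finally show ?thesis
    by (simp add: sum.distrib sum_distrib_left[symmetric] rhs_tr_sum[OF \<open>N \<ge> 1\<close>])
qed

lemma euler_state_bounded: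
  "real n * step N \<le> real N \<Longrightarrow> state_bounded N (real n * step N) (euler N n)"
proof (induction n)
  case 0
  have "(\<Sum>i\<in>{2..N}. c0 i) \<le> (\<Sum>i\<in>{2..N}. g i * c0 i)"
  proof (rule sum_mono)
    fix i assume "i \<in> {2..N}"
    then show "c0 i \<le> g i * c0 i"
      using g_ge_1[of i] c0_nonneg[of i] mult_right_mono[of 1 "g i" "c0 i"] by simp
  qed
  also have "\<dots> \<le> G0" by (rule g_c0_partial_le) auto
  finally show ?case
    using c0_nonneg c0_1_nonneg
    by (auto simp: state_bounded_def euler_0 init_tr_def C1_bound_def mass_bound_def)
next
  case (Suc n)
  define t where "t = real n * step N"
  have t: "0 \<le> t" "t + step N \<le> real N"
    using Suc.prems step_pos[of N] by (auto simp: t_def algebra_simps)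
  then have N: "N \<ge> 1" using step_pos[of N] by (cases N) auto
  have y: "state_bounded N t (euler N n)"
    using Suc t step_pos[of N] by (simp add: t_def)
  have "real (Suc n) * step N = t + step N" by (simp add: t_def algebra_simps)
  then show ?case
    using euler_step_nonneg[OF y] euler_step_C1_le[OF y N] euler_step_mass_le[OF y t(1) N]
      euler_outside[of _ N "Suc n"] t step_pos[of N]
    by (auto simp: state_bounded_def euler_Suc)
qed

text \<open>The moment inequality: after summation by parts only the flux into size 2 and the
  increments of the weight remain, both controlled by \<open>y\<^sub>1 \<le> B\<close>.\<close>
lemma weighted_rhs_tr_le:
  assumes w: "admissible_weight a K w" and "0 \<le> K" and y_nonneg: "\<forall>i. 0 \<le> y i"
    and y1: "y 1 \<le> B" and "N \<ge> 1"
  shows "(\<Sum>i\<in>{2..N}. w i * rhs_tr N y i) \<le> w 2 * a 1 * B\<^sup>2 + K * B * (\<Sum>i\<in>{2..N}. w i * y i)"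
proof -
  have w_nonneg: "\<And>i. i \<ge> 1 \<Longrightarrow> 0 \<le> w i" and w_mono: "\<And>i. i \<ge> 1 \<Longrightarrow> w i \<le> w (i+1)"
    and w_increment: "\<And>i. i \<ge> 1 \<Longrightarrow> (w (i+1) - w i) * a i \<le> K * w i"
    using w by (auto simp: admissible_weight_def)
  have "B \<ge> 0" using y1 y_nonneg order_trans by blast
  have "flux_tr N y 1 \<le> a 1 * y 1 * y 1" using flux_tr_le[OF y_nonneg, of 1 N] by simp
  also have "\<dots> \<le> a 1 * B * B"
    using y1 y_nonneg a1_nonneg \<open>B \<ge> 0\<close> by (intro mult_mono) (auto intro: mult_nonneg_nonneg)
  finally have "w 2 * flux_tr N y 1 \<le> w 2 * a 1 * B\<^sup>2"
    using w_nonneg[of 2] mult_left_mono by (fastforce simp: power2_eq_square mult.assoc)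
  moreover have "(w (i+1) - w i) * flux_tr N y i \<le> K * B * (w i * y i)" if "i \<in> {2..N}" for i
  proof -
    have "(w (i+1) - w i) * flux_tr N y i \<le> ((w (i+1) - w i) * a i) * (y 1 * y i)"
      using flux_tr_le[OF y_nonneg, of i N] w_mono[of i] that
      by (simp add: mult_left_mono mult.assoc)
    also have "\<dots> \<le> (K * w i) * (B * y i)"
    proof (rule mult_mono)
      show "(w (i+1) - w i) * a i \<le> K * w i" using w_increment[of i] that by simp
      show "y 1 * y i \<le> B * y i" using y1 y_nonneg by (intro mult_right_mono) auto
    qed (use w_nonneg[of i] that \<open>0 \<le> K\<close> y_nonneg in auto)
    finally show ?thesis by (simp add: algebra_simps)
  qed
  then have "(\<Sum>i\<in>{2..N}. (w (i+1) - w i) * flux_tr N y i) \<le> K * B * (\<Sum>i\<in>{2..N}. w i * y i)"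
    unfolding sum_distrib_left by (rule sum_mono)
  ultimately show ?thesis using rhs_tr_weighted_sum[OF \<open>N \<ge> 1\<close>, of w y] by simp
qed

text \<open>Discrete Gronwall argument, using \<open>1 + h K B \<le> exp (h K B)\<close> at each step.\<close>
lemma euler_moment_growth:
  assumes w: "admissible_weight a K w" and "0 \<le> K"
    and W0: "(\<Sum>i\<in>{2..N}. w i * c0 i) \<le> W0" and "T \<le> real N"
  shows "real n * step N \<le> T \<Longrightarrow> (\<Sum>i\<in>{2..N}. w i * euler N n i)
      \<le> (W0 + real n * step N * (w 2 * a 1 * (C1_bound T)\<^sup>2)) * exp (K * C1_bound T * (real n * step N))"
proof (induction n)
  case 0
  have "(\<Sum>i\<in>{2..N}. w i * euler N 0 i) = (\<Sum>i\<in>{2..N}. w i * c0 i)"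
    by (intro sum.cong) (auto simp: euler_0 init_tr_def)
  then show ?case using W0 by simp
next
  case (Suc n)
  define h t y B where "h = step N" and "t = real n * h" and "y = euler N n" and "B = C1_bound T"
  define p m where "p = w 2 * a 1 * B\<^sup>2" and "m = (\<Sum>i\<in>{2..N}. w i * y i)"
  have h: "h > 0" unfolding h_def by (rule step_pos)
  have t: "real (Suc n) * step N = t + h" "t \<ge> 0" "t + h \<le> T"
    using Suc.prems h by (auto simp: t_def h_def algebra_simps)
  then have "N \<ge> 1" using \<open>T \<le> real N\<close> h by (cases N) auto
  have "state_bounded N t y"
    using euler_state_bounded[of n N] t h \<open>T \<le> real N\<close> by (simp add: y_def t_def h_def)
  then have y_nonneg: "\<forall>i. 0 \<le> y i" and "y 1 \<le> B"
    using C1_bound_mono[of t T] t h by (auto simp: state_bounded_def B_def)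
  have "0 \<le> B" using \<open>y 1 \<le> B\<close> y_nonneg order_trans by blast
  have "0 \<le> m" unfolding m_def using w y_nonneg
    by (auto simp: admissible_weight_def intro: sum_nonneg)
  have "0 \<le> p" unfolding p_def using w a1_nonneg by (simp add: admissible_weight_def)
  have IH: "m \<le> (W0 + t * p) * exp (K * B * t)"
    using Suc.IH t h unfolding m_def y_def t_def h_def p_def B_def by simp
  have "(\<Sum>i\<in>{2..N}. w i * euler N (Suc n) i) = m + h * (\<Sum>i\<in>{2..N}. w i * rhs_tr N y i)"
    unfolding m_def y_def h_def euler_Suc by (simp add: algebra_simps sum.distrib sum_distrib_left)
  also have "\<dots> \<le> m + h * (p + K * B * m)"
    using weighted_rhs_tr_le[OF w \<open>0 \<le> K\<close> y_nonneg \<open>y 1 \<le> B\<close> \<open>N \<ge> 1\<close>] h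
    unfolding m_def p_def by (intro add_left_mono mult_left_mono) auto
  also have "\<dots> = m * (1 + h * K * B) + h * p" by (simp add: algebra_simps)
  also have "\<dots> \<le> ((W0 + t * p) * exp (K * B * t)) * exp (h * K * B) + h * p * exp (K * B * (t + h))"
  proof (rule add_mono)
    show "m * (1 + h * K * B) \<le> ((W0 + t * p) * exp (K * B * t)) * exp (h * K * B)"
      using IH h \<open>0 \<le> K\<close> \<open>0 \<le> B\<close> \<open>0 \<le> m\<close> by (intro mult_mono) auto
    have "1 \<le> exp (K * B * (t + h))" using h t \<open>0 \<le> K\<close> \<open>0 \<le> B\<close> by simp
    then show "h * p \<le> h * p * exp (K * B * (t + h))"
      using h \<open>0 \<le> p\<close> mult_left_mono[of 1 _ "h * p"] by simp
  qed
  also have "\<dots> = (W0 + (t + h) * p) * exp (K * B * (t + h))"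
    by (simp add: exp_add[symmetric] algebra_simps)
  finally show ?case unfolding t p_def B_def .
qed

definition moment_bound :: "(nat \<Rightarrow> real) \<Rightarrow> real \<Rightarrow> real \<Rightarrow> real \<Rightarrow> real" where
  "moment_bound w K W0 T = (W0 + T * (w 2 * a 1 * (C1_bound T)\<^sup>2)) * exp (K * C1_bound T * T)"

lemma euler_moment_le:
  assumes w: "admissible_weight a K w" and "0 \<le> K"
    and W0: "(\<Sum>i\<in>{2..N}. w i * c0 i) \<le> W0" and "T \<le> real N"
    and nT: "real n * step N \<le> T"
  shows "(\<Sum>i\<in>{2..N}. w i * euler N n i) \<le> moment_bound w K W0 T"
proof -
  define t where "t = real n * step N"
  have t: "0 \<le> t" "t \<le> T" using nT step_pos[of N] unfolding t_def by auto
  have w_nonneg: "\<And>i. i \<ge> 1 \<Longrightarrow> 0 \<le> w i" using w by (simp add: admissible_weight_def)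
  have "0 \<le> (\<Sum>i\<in>{2..N}. w i * c0 i)" using w_nonneg c0_nonneg by (intro sum_nonneg) auto
  then have "0 \<le> W0" using W0 by simp
  have p: "0 \<le> w 2 * a 1 * (C1_bound T)\<^sup>2" using w_nonneg[of 2] a1_nonneg by simp
  have "(\<Sum>i\<in>{2..N}. w i * euler N n i)
      \<le> (W0 + t * (w 2 * a 1 * (C1_bound T)\<^sup>2)) * exp (K * C1_bound T * t)"
    using euler_moment_growth[OF w \<open>0 \<le> K\<close> W0 \<open>T \<le> real N\<close> nT] unfolding t_def by simp
  also have "\<dots> \<le> moment_bound w K W0 T"
    unfolding moment_bound_def
    using t p \<open>0 \<le> K\<close> \<open>0 \<le> W0\<close> C1_bound_nonneg[of T]
    by (intro mult_mono add_left_mono mult_right_mono) (auto intro: mult_left_mono mult_nonneg_nonneg)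
  finally show ?thesis .
qed

lemma g_nonneg: "i \<ge> 1 \<Longrightarrow> 0 \<le> g i" using g_ge_1[of i] by simp

definition g_moment_bound :: "real \<Rightarrow> real" where "g_moment_bound T = moment_bound g Kg G0 T"

lemma g_c0_sum_le: "(\<Sum>i\<in>{2..N}. g i * c0 i) \<le> G0"
  by (rule g_c0_partial_le) auto

definition moment_bounded :: "nat \<Rightarrow> real \<Rightarrow> (nat \<Rightarrow> real) \<Rightarrow> bool" where
  "moment_bounded N T y \<longleftrightarrow> (\<forall>i. 0 \<le> y i) \<and> (\<forall>i. i = 0 \<or> N < i \<longrightarrow> y i = 0) \<and>
     y 1 \<le> C1_bound T \<and> (\<Sum>i\<in>{2..N}. g i * y i) \<le> g_moment_bound T"

lemma euler_moment_bounded: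
  assumes nT: "real n * step N \<le> T" and TN: "T \<le> real N"
  shows "moment_bounded N T (euler N n)"
proof -
  have "state_bounded N (real n * step N) (euler N n)"
    using euler_state_bounded[of n N] nT TN by simp
  moreover have "C1_bound (real n * step N) \<le> C1_bound T" using nT by (rule C1_bound_mono)
  moreover have "(\<Sum>i\<in>{2..N}. g i * euler N n i) \<le> g_moment_bound T"
    unfolding g_moment_bound_def
      by (rule euler_moment_le[OF g_admissible Kg_nonneg g_c0_sum_le TN nT])
  ultimately show ?thesis by (auto simp: moment_bounded_def state_bounded_def)
qed

definition sup_bound :: "real \<Rightarrow> real" where "sup_bound T = C1_bound T + g_moment_bound T"

lemma sup_bound_nonneg: "0 \<le> T \<Longrightarrow> 0 \<le> sup_bound T"
  unfolding sup_bound_def g_moment_bound_def moment_bound_def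
  using C1_bound_nonneg[of T] G0_nonneg g_nonneg[of 2] a1_nonneg by simp

lemma moment_bounded_nonneg:
  assumes "moment_bounded N T y"
  shows "0 \<le> C1_bound T" "0 \<le> g_moment_bound T" "0 \<le> sup_bound T"
proof -
  have "0 \<le> (\<Sum>i\<in>{2..N}. g i * y i)"
    using assms g_nonneg by (intro sum_nonneg) (auto simp: moment_bounded_def)
  then show "0 \<le> C1_bound T" "0 \<le> g_moment_bound T"
    using assms order_trans by (auto simp: moment_bounded_def)
  then show "0 \<le> sup_bound T" by (simp add: sup_bound_def)
qed

lemma moment_bounded_le_sup_bound:
  assumes y: "moment_bounded N T y"
  shows "y j \<le> sup_bound T"
proof -
  note bounds = moment_bounded_nonneg[OF y]
  have y_nonneg: "\<And>i. 0 \<le> y i" using y by (simp add: moment_bounded_def)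
  consider "j = 1" | "2 \<le> j \<and> j \<le> N" | "j = 0 \<or> N < j" by linarith
  then show ?thesis
  proof cases
    case 2
    have "y j \<le> g j * y j" using g_ge_1[of j] y_nonneg[of j] 2 mult_right_mono[of 1 "g j" "y j"]
      by simp
    also have "\<dots> \<le> (\<Sum>i\<in>{2..N}. g i * y i)"
      using y_nonneg 2 g_nonneg by (intro member_le_sum[where f="\<lambda>i. g i * y i"]) auto
    finally show ?thesis using y bounds by (simp add: moment_bounded_def sup_bound_def)
  qed (use y bounds in \<open>auto simp: moment_bounded_def sup_bound_def\<close>)
qed

lemma moment_bounded_asum_le:
  assumes y: "moment_bounded N T y"
  shows "(\<Sum>j\<in>{1..N}. a j * y j) \<le> A * sup_bound T"
proof (cases "N \<ge> 1")
  case False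
  then show ?thesis using A_nonneg moment_bounded_nonneg[OF y] by simp
next
  case True
  have y_nonneg: "\<And>i. 0 \<le> y i" using y by (simp add: moment_bounded_def)
  have "{1..N} = insert 1 {2..N}" using True by auto
  then have "(\<Sum>j\<in>{1..N}. a j * y j) = a 1 * y 1 + (\<Sum>j\<in>{2..N}. a j * y j)" by simp
  also have "\<dots> \<le> A * y 1 + (\<Sum>j\<in>{2..N}. A * (g j * y j))"
  proof (intro add_mono sum_mono)
    show "a 1 * y 1 \<le> A * y 1" using a1_le y_nonneg by (intro mult_right_mono) auto
    show "a j * y j \<le> A * (g j * y j)" if "j \<in> {2..N}" for j
      using a_le_g[of j] that y_nonneg[of j] mult_right_mono by (fastforce simp: mult.assoc)
  qed
  also have "\<dots> \<le> A * sup_bound T"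
    using y A_nonneg unfolding sup_bound_def sum_distrib_left[symmetric] distrib_left[symmetric]
    by (intro mult_left_mono) (auto simp: moment_bounded_def)
  finally show ?thesis .
qed

definition lip_const :: "nat \<Rightarrow> real \<Rightarrow> real" where
  "lip_const i T = (if i = 1 then lam + C1_bound T * (A * sup_bound T + A * C1_bound T)
     else (a (i-1) + a i) * C1_bound T * sup_bound T + (b i + b (i+1)) * sup_bound T)"

lemma abs_rhs_tr_1_le:
  assumes y: "moment_bounded N T y"
  shows "\<bar>rhs_tr N y 1\<bar> \<le> lip_const 1 T"
proof -
  have y_nonneg: "\<And>i. 0 \<le> y i" and "y 1 \<le> C1_bound T"
    using y by (auto simp: moment_bounded_def)
  define S where "S = (\<Sum>j\<in>{1..N}. a j * y j)"
  have "0 \<le> S" unfolding S_def using a_nonneg y_nonneg by (intro sum_nonneg) auto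
  then have "0 \<le> y 1 * (S + a 1 * y 1)" using y_nonneg a1_nonneg by simp
  moreover have "y 1 * (S + a 1 * y 1) \<le> C1_bound T * (A * sup_bound T + A * C1_bound T)"
    using moment_bounded_asum_le[OF y] a1_le \<open>y 1 \<le> C1_bound T\<close> y_nonneg A_nonneg \<open>0 \<le> S\<close>
      moment_bounded_nonneg[OF y] a1_nonneg
    unfolding S_def[symmetric] by (intro mult_mono add_mono) auto
  ultimately show ?thesis
    using lam_nonneg moment_bounded_nonneg[OF y] A_nonneg
    by (auto simp: rhs_tr_def lip_const_def S_def)
qed

lemma abs_rhs_tr_mid_le:
  assumes y: "moment_bounded N T y" and i: "2 \<le> i" "i \<le> N"
  shows "\<bar>rhs_tr N y i\<bar> \<le> lip_const i T"
proof -
  have y_nonneg: "\<forall>j. 0 \<le> y j" and y1: "y 1 \<le> C1_bound T"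
    using y by (auto simp: moment_bounded_def)
  note bounds = moment_bounded_nonneg[OF y] moment_bounded_le_sup_bound[OF y]
  have i1: "1 \<le> i - 1" "i - 1 + 1 = i" using i by auto
  have ab: "0 \<le> a (i-1)" "0 \<le> a i" "0 \<le> b i" "0 \<le> b (i+1)" using a_nonneg b_nonneg i by auto
  have m: "a (i-1) * y 1 * y (i-1) \<le> a (i-1) * C1_bound T * sup_bound T"
    "a i * y 1 * y i \<le> a i * C1_bound T * sup_bound T"
    "b i * y i \<le> b i * sup_bound T" "b (i+1) * y (i+1) \<le> b (i+1) * sup_bound T"
    using ab y_nonneg y1 bounds by (auto intro!: mult_mono mult_left_mono)
  have "0 \<le> a (i-1) * C1_bound T * sup_bound T" "0 \<le> a i * C1_bound T * sup_bound T"
    "0 \<le> b i * sup_bound T" "0 \<le> b (i+1) * sup_bound T"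
    using ab bounds by auto
  moreover have "- (b i * y i) \<le> flux_tr N y (i-1)" "flux_tr N y (i-1) \<le> a (i-1) * y 1 * y (i-1)"
    using flux_tr_ge[OF y_nonneg i1(1), of N] flux_tr_le[OF y_nonneg i1(1), of N]
      by (simp_all only: i1(2))
  moreover have "- (b (i+1) * y (i+1)) \<le> flux_tr N y i" "flux_tr N y i \<le> a i * y 1 * y i"
    using flux_tr_ge[OF y_nonneg, of i N] flux_tr_le[OF y_nonneg, of i N] i by simp_all
  moreover have "lip_const i T = a (i-1) * C1_bound T * sup_bound T + a i * C1_bound T * sup_bound T
      + b i * sup_bound T + b (i+1) * sup_bound T"
    using i by (simp add: lip_const_def algebra_simps)
  ultimately show ?thesis
    using rhs_tr_mid[OF i, of y] m unfolding abs_le_iff by linarith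
qed

lemma abs_rhs_tr_le:
  assumes y: "moment_bounded N T y" and "i \<ge> 1"
  shows "\<bar>rhs_tr N y i\<bar> \<le> lip_const i T"
proof -
  consider "i = 1" | "2 \<le> i \<and> i \<le> N" | "2 \<le> i" "N < i" using \<open>i \<ge> 1\<close> by linarith
  then show ?thesis
  proof cases
    case 3
    then have "0 \<le> lip_const i T"
      using a_nonneg b_nonneg moment_bounded_nonneg[OF y]
      by (auto simp: lip_const_def intro!: add_nonneg_nonneg mult_nonneg_nonneg)
    with 3 show ?thesis by (simp add: rhs_tr_def)
  qed (use abs_rhs_tr_1_le[OF y] abs_rhs_tr_mid_le[OF y] in auto)
qed

definition grid :: "nat \<Rightarrow> real \<Rightarrow> nat" where "grid N t = nat \<lfloor>t / step N\<rfloor>"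
definition interp :: "nat \<Rightarrow> real \<Rightarrow> nat \<Rightarrow> real" where
  "interp N t i = euler N (grid N t) i + (t - real (grid N t) * step N) * rhs_tr N (euler N (grid N t)) i"

lemma grid_bounds:
  assumes t0: "0 \<le> t"
  shows "real (grid N t) * step N \<le> t" "t < (real (grid N t) + 1) * step N"
proof -
  have hp: "0 < step N" by (rule step_pos)
  have q0: "0 \<le> t / step N" using t0 hp by simp
  have e: "real (grid N t) = real_of_int \<lfloor>t / step N\<rfloor>" unfolding grid_def using q0 by simp
  have "real_of_int \<lfloor>t / step N\<rfloor> \<le> t / step N" by (rule of_int_floor_le)
  then show "real (grid N t) * step N \<le> t" using e hp by (simp add: le_divide_eq)
  have "t / step N < real_of_int \<lfloor>t / step N\<rfloor> + 1" by (rule real_of_int_floor_add_one_gt)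
  then have "t < (real_of_int \<lfloor>t / step N\<rfloor> + 1) * step N" by (simp only: pos_divide_less_eq[OF hp])
  then show "t < (real (grid N t) + 1) * step N" using e by simp
qed

lemma grid_mono: "s \<le> t \<Longrightarrow> grid N s \<le> grid N t"
  unfolding grid_def using step_pos[of N] by (intro nat_mono floor_mono divide_right_mono) auto

lemma grid_node: "grid N (real m * step N) = m"
  unfolding grid_def using step_pos[of N] by simp

lemma interp_node: "interp N (real m * step N) i = euler N m i"
  unfolding interp_def grid_node by simp

lemma euler_add: "euler N (p + d) i = euler N p i + (\<Sum>j\<in>{p..<p+d}. step N * rhs_tr N (euler N j) i)"
  by (induction d) (simp_all add: euler_Suc)

lemma interp_sum_le_of_nodes:
  assumes t0: "0 \<le> t"
    and M1: "(\<Sum>i\<in>F. w i * euler N (grid N t) i) \<le> M"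
    and M2: "(\<Sum>i\<in>F. w i * euler N (Suc (grid N t)) i) \<le> M"
  shows "(\<Sum>i\<in>F. w i * interp N t i) \<le> M"
proof -
  define n where "n = grid N t"
  define h where "h = step N"
  define \<theta> where "\<theta> = (t - real n * h) / h"
  have hp: "0 < h" unfolding h_def by (rule step_pos)
  have th0: "0 \<le> \<theta>" unfolding \<theta>_def using grid_bounds(1)[OF t0, of N] hp unfolding n_def h_def
    by simp
  have th1: "\<theta> \<le> 1" unfolding \<theta>_def using grid_bounds(2)[OF t0, of N] hp unfolding n_def h_def
    by (simp add: divide_le_eq algebra_simps)
  have e: "interp N t i = (1 - \<theta>) * euler N n i + \<theta> * euler N (Suc n) i" for i
    unfolding interp_def euler_Suc \<theta>_def n_def[symmetric] h_def[symmetric] using hp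
      by (simp add: field_simps)
  have "(\<Sum>i\<in>F. w i * interp N t i) = (\<Sum>i\<in>F. (1 - \<theta>) * (w i * euler N n i)
      + \<theta> * (w i * euler N (Suc n) i))"
    by (intro sum.cong) (simp_all add: e algebra_simps)
  also have "\<dots> = (1 - \<theta>) * (\<Sum>i\<in>F. w i * euler N n i) + \<theta> * (\<Sum>i\<in>F. w i * euler N (Suc n) i)"
    by (simp add: sum.distrib sum_distrib_left)
  finally have "(\<Sum>i\<in>F. w i * interp N t i) = (1 - \<theta>) * (\<Sum>i\<in>F. w i * euler N n i)
      + \<theta> * (\<Sum>i\<in>F. w i * euler N (Suc n) i)" .
  also have "\<dots> \<le> (1 - \<theta>) * M + \<theta> * M"
    using M1 M2 th0 th1 unfolding n_def by (intro add_mono mult_left_mono) auto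
  finally show ?thesis by (simp add: algebra_simps)
qed

lemma interp_outside: assumes "i = 0 \<or> N < i" shows "interp N t i = 0"
proof -
  have "rhs_tr N y i = 0" for y unfolding rhs_tr_def using assms by auto
  then show ?thesis unfolding interp_def using euler_outside[OF assms] by simp
qed

lemma interp_moment_bounded:
  assumes t0: "0 \<le> t" and tT: "t \<le> T" and TN: "T + 1 \<le> real N"
  shows "moment_bounded N (T+1) (interp N t)"
proof -
  define n where "n = grid N t"
  have "real n * step N \<le> T + 1" "real (Suc n) * step N \<le> T + 1"
    using grid_bounds(1)[OF t0, of N] tT step_le_1[of N] unfolding n_def
      by (auto simp: algebra_simps)
  then have "moment_bounded N (T+1) (euler N n)" "moment_bounded N (T+1) (euler N (Suc n))"
    using euler_moment_bounded TN by auto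
  then have nodes: "0 \<le> euler N m i" "euler N m 1 \<le> C1_bound (T+1)"
    "(\<Sum>i\<in>{2..N}. g i * euler N m i) \<le> g_moment_bound (T+1)"
    if "m = grid N t \<or> m = Suc (grid N t)" for m i
    using that unfolding n_def moment_bounded_def by auto
  have "(\<Sum>j\<in>{i}. (-1) * interp N t j) \<le> 0" for i
    by (rule interp_sum_le_of_nodes[OF t0]) (use nodes in auto)
  moreover have "(\<Sum>j\<in>{1}. 1 * interp N t j) \<le> C1_bound (T+1)"
    by (rule interp_sum_le_of_nodes[OF t0]) (use nodes in auto)
  moreover have "(\<Sum>i\<in>{2..N}. g i * interp N t i) \<le> g_moment_bound (T+1)"
    by (rule interp_sum_le_of_nodes[OF t0]) (use nodes in auto)
  ultimately show ?thesis
    using interp_outside by (auto simp: moment_bounded_def)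
qed

text \<open>Between two times the interpolant moves by the slopes of the cells it crosses, weighted
  by the lengths of the pieces of \<open>[s, t]\<close> inside them.\<close>
lemma interp_increment_eq:
  fixes N i :: nat and s t c :: real
  defines "p \<equiv> grid N s" and "q \<equiv> grid N t" and "D \<equiv> \<lambda>j. rhs_tr N (euler N j) i - c"
  assumes "p < q"
  shows "interp N t i - interp N s i - (t - s) * c =
    (real (Suc p) * step N - s) * D p + (\<Sum>j\<in>{Suc p..<q}. step N * D j) + (t - real q * step N) * D q"
proof -
  have "euler N q i = euler N p i + (\<Sum>j\<in>{p..<p + (q - p)}. step N * rhs_tr N (euler N j) i)"
    using euler_add[of N p "q - p" i] \<open>p < q\<close> by simp
  also have "{p..<p + (q - p)} = insert p {Suc p..<q}" using \<open>p < q\<close> by auto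
  finally have "euler N q i
      = euler N p i + step N * (D p + c) + (\<Sum>j\<in>{Suc p..<q}. step N * (D j + c))"
    by (simp add: D_def)
  moreover have "(\<Sum>j\<in>{Suc p..<q}. step N * (D j + c))
      = (\<Sum>j\<in>{Suc p..<q}. step N * D j) + (real q - real p - 1) * step N * c"
    using \<open>p < q\<close> by (simp add: sum.distrib distrib_left of_nat_diff)
  ultimately show ?thesis
    by (simp add: interp_def p_def[symmetric] q_def[symmetric] D_def algebra_simps)
qed

lemma interp_increment:
  assumes s0: "0 \<le> s" and st: "s \<le> t"
    and E: "\<And>m. grid N s \<le> m \<Longrightarrow> m \<le> grid N t \<Longrightarrow> \<bar>rhs_tr N (euler N m) i - c\<bar> \<le> E"
  shows "\<bar>interp N t i - interp N s i - (t - s) * c\<bar> \<le> (t - s) * E"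
proof -
  define p q h where "p = grid N s" and "q = grid N t" and "h = step N"
  define D where "D j = rhs_tr N (euler N j) i - c" for j
  have "0 < h" unfolding h_def by (rule step_pos)
  have "p \<le> q" unfolding p_def q_def using st by (rule grid_mono)
  have ps: "s < (real p + 1) * h" and qt: "real q * h \<le> t"
    using grid_bounds[OF s0, of N] grid_bounds[of t N] s0 st unfolding p_def q_def h_def by auto
  have ED: "p \<le> j \<Longrightarrow> j \<le> q \<Longrightarrow> \<bar>D j\<bar> \<le> E" for j unfolding D_def p_def q_def using E by simp
  show ?thesis
  proof (cases "p = q")
    case True
    then have "interp N t i - interp N s i - (t - s) * c = (t - s) * D p"
      by (simp add: interp_def p_def q_def D_def algebra_simps)
    then show ?thesis using ED[of p] \<open>p \<le> q\<close> st by (simp add: abs_mult mult_left_mono)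
  next
    case False
    then have "p < q" using \<open>p \<le> q\<close> by simp
    have "0 \<le> real (Suc p) * h - s" "0 \<le> t - real q * h"
      using ps qt by (simp_all add: algebra_simps)
    then have "\<bar>(real (Suc p) * h - s) * D p\<bar> \<le> (real (Suc p) * h - s) * E"
      "\<bar>(t - real q * h) * D q\<bar> \<le> (t - real q * h) * E"
      using ED[of p] ED[of q] \<open>p \<le> q\<close> by (simp_all add: abs_mult mult_left_mono)
    moreover have "\<bar>\<Sum>j\<in>{Suc p..<q}. h * D j\<bar> \<le> (\<Sum>j\<in>{Suc p..<q}. h * E)"
      using ED \<open>0 < h\<close> by (intro order_trans[OF sum_abs sum_mono]) (auto simp: abs_mult)
    moreover have "(real (Suc p) * h - s) * E + (\<Sum>j\<in>{Suc p..<q}. h * E) + (t - real q * h) * E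
        = (t - s) * E"
      using \<open>p < q\<close> by (simp add: of_nat_diff algebra_simps)
    ultimately show ?thesis
      using interp_increment_eq[of N s t i c] \<open>p < q\<close>
      unfolding p_def[symmetric] q_def[symmetric] h_def[symmetric] D_def[symmetric] abs_le_iff
      by (smt (verit, best))
  qed
qed

lemma interp_lipschitz:
  assumes s0: "0 \<le> s" and st: "s \<le> t" and tT: "t \<le> T" and TN: "T \<le> real N" and i1: "i \<ge> 1"
  shows "\<bar>interp N t i - interp N s i\<bar> \<le> (t - s) * lip_const i T"
proof -
  have "\<bar>interp N t i - interp N s i - (t - s) * 0\<bar> \<le> (t - s) * lip_const i T"
  proof (rule interp_increment[OF s0 st])
    fix m assume m: "grid N s \<le> m" "m \<le> grid N t"
    have "real m * step N \<le> real (grid N t) * step N" using m step_pos[of N]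
      by (intro mult_right_mono) auto
    also have "\<dots> \<le> t" using grid_bounds(1)[of t N] s0 st by simp
    finally have mT: "real m * step N \<le> T" using tT by simp
    show "\<bar>rhs_tr N (euler N m) i - 0\<bar> \<le> lip_const i T"
      using abs_rhs_tr_le[OF euler_moment_bounded[OF mT TN] i1] by simp
  qed
  then show ?thesis by simp
qed

definition g_total_bound :: "real \<Rightarrow> real" where
  "g_total_bound T = g 1 * C1_bound (T+1) + g_moment_bound (T+1)"

lemma interp_finite_sum_le:
  assumes t0: "0 \<le> t" and tT: "t \<le> T" and TN: "T + 1 \<le> real N"
    and F: "finite F" and w: "\<And>i. i \<ge> 1 \<Longrightarrow> 0 \<le> w i"
  shows "(\<Sum>i\<in>F. w i * interp N t i) \<le> w 1 * interp N t 1 + (\<Sum>i\<in>{2..N}. w i * interp N t i)"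
proof -
  have nn: "\<And>i. 0 \<le> interp N t i"
    using interp_moment_bounded[OF t0 tT TN] by (simp add: moment_bounded_def)
  have N1: "N \<ge> 1" using TN tT t0 by simp
  have "(\<Sum>i\<in>F. w i * interp N t i) = (\<Sum>i\<in>F \<inter> {1..N}. w i * interp N t i)"
  proof (rule sum.mono_neutral_right)
    show "\<forall>i\<in>F - F \<inter> {1..N}. w i * interp N t i = 0"
    proof
      fix i assume "i \<in> F - F \<inter> {1..N}"
      then have "i = 0 \<or> N < i" by auto
      then show "w i * interp N t i = 0" using interp_outside by simp
    qed
  qed (use F in auto)
  also have "\<dots> \<le> (\<Sum>i\<in>{1..N}. w i * interp N t i)"
    by (rule sum_mono2) (use w nn in \<open>auto intro!: mult_nonneg_nonneg\<close>)
  also have "{1..N} = insert 1 {2..N}" using N1 by auto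
  finally show ?thesis by simp
qed

lemma interp_component_bounds:
  assumes t0: "0 \<le> t" and tT: "t \<le> T" and TN: "T + 1 \<le> real N"
  shows "0 \<le> interp N t i" "interp N t i \<le> sup_bound (T+1)"
  using interp_moment_bounded[OF t0 tT TN] moment_bounded_le_sup_bound
  by (auto simp: moment_bounded_def)

section \<open>Compactness and the limit\<close>

text \<open>Component \<open>i\<close> of the interpolants at the rational time \<open>p / (q + 1)\<close>, as a sequence in
  \<open>N\<close> indexed by the code of \<open>(i, p, q)\<close>; it is set to \<open>0\<close> while that time is not yet covered by
  the bounds of the \<open>N\<close>-th scheme.\<close>
definition sample :: "nat \<Rightarrow> nat \<Rightarrow> real" where
  "sample k n = (case prod_decode k of (i, pq) \<Rightarrow> (case prod_decode pq of (p, q) \<Rightarrow>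
     (if real p / real (Suc q) + 1 \<le> real n then interp n (real p / real (Suc q)) i else 0)))"

lemma sample_encode: "sample (prod_encode (i, prod_encode (p, q))) n =
   (if real p / real (Suc q) + 1 \<le> real n then interp n (real p / real (Suc q)) i else 0)"
  unfolding sample_def by simp

lemma sample_bounded: "\<exists>B. \<forall>n. \<bar>sample k n\<bar> \<le> B"
proof -
  obtain i pq where k: "prod_decode k = (i, pq)" by (cases "prod_decode k")
  obtain p q where pq: "prod_decode pq = (p, q)" by (cases "prod_decode pq")
  define \<tau> where "\<tau> = real p / real (Suc q)"
  have t0: "0 \<le> \<tau>" unfolding \<tau>_def by simp
  have "\<bar>sample k n\<bar> \<le> sup_bound (\<tau> + 1)" for n
  proof (cases "\<tau> + 1 \<le> real n")
    case True
    then have "sample k n = interp n \<tau> i" unfolding \<tau>_def by (simp add: sample_def k pq)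
    then show ?thesis using interp_component_bounds[OF t0 order_refl True, of i] by simp
  next
    case False
    then have "sample k n = 0" unfolding \<tau>_def by (simp add: sample_def k pq)
    moreover have "0 \<le> sup_bound (\<tau> + 1)" using t0 by (intro sup_bound_nonneg) simp
    ultimately show ?thesis by simp
  qed
  then show ?thesis by blast
qed

definition sub :: "nat \<Rightarrow> nat" where
  "sub = (SOME r. strict_mono r \<and> (\<forall>k. convergent (\<lambda>n. sample k (r n))))"

lemma strict_mono_sub: "strict_mono sub"
  and convergent_sample_sub: "convergent (\<lambda>n. sample k (sub n))"
proof -
  have "\<exists>r. strict_mono r \<and> (\<forall>k. convergent (\<lambda>n. sample k (r n)))"
    by (rule bounded_family_convergent_subseq[OF sample_bounded])
  then have "strict_mono sub \<and> (\<forall>k. convergent (\<lambda>n. sample k (sub n)))"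
    unfolding sub_def by (rule someI_ex)
  then show "strict_mono sub" "convergent (\<lambda>n. sample k (sub n))" by auto
qed

lemma sub_ge: "n \<le> sub n" using strict_mono_sub by (rule seq_suble)

lemma sub_eventually_ge: "\<exists>M. \<forall>n\<ge>M. T \<le> real (sub n)"
proof (intro exI[of _ "nat \<lceil>T\<rceil>"] allI impI)
  fix n assume "nat \<lceil>T\<rceil> \<le> n"
  then have "T \<le> real n" by linarith
  then show "T \<le> real (sub n)" using sub_ge[of n] by (meson of_nat_le_iff order_trans)
qed

lemma interp_lipschitz_abs: "0 \<le> s \<Longrightarrow> s \<le> t \<Longrightarrow> t \<le> T \<Longrightarrow> T \<le> real N \<Longrightarrow> i \<ge> 1 \<Longrightarrow>
   \<bar>interp N t i - interp N s i\<bar> \<le> (t - s) * \<bar>lip_const i T\<bar>"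
  using interp_lipschitz[of s t T N i] mult_left_mono[OF abs_ge_self, of "t - s" "lip_const i T"]
  by simp

text \<open>Equicontinuity upgrades convergence at the rational times \<open>p / (q+1)\<close>, which the
  diagonal subsequence provides, to convergence at every time.\<close>
lemma interp_sub_convergent:
  assumes t0: "0 \<le> t"
  shows "convergent (\<lambda>n. interp (sub n) t i)"
proof (cases "i = 0")
  case True
  then show ?thesis using interp_outside by (simp add: convergent_const)
next
  case False
  define T L where "T = t + 1" and "L = \<bar>lip_const i T\<bar> + 1"
  have "Cauchy (\<lambda>n. interp (sub n) t i)"
    unfolding Cauchy_iff
  proof (intro allI impI)
    fix e :: real assume "0 < e"
    define q where "q = nat \<lceil>3 * L / e\<rceil>"
    define p where "p = nat \<lfloor>t * real (Suc q)\<rfloor>"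
    define \<tau> where "\<tau> = real p / real (Suc q)"
    have \<tau>: "0 \<le> \<tau>" "\<tau> \<le> t" "t - \<tau> < 1 / real (Suc q)"
      unfolding \<tau>_def p_def using floor_divide_approx[OF t0, of q] by auto
    have "(t - \<tau>) * L \<le> (1 / real (Suc q)) * L"
      using \<tau> by (intro mult_right_mono) (auto simp: L_def)
    also have "\<dots> < e / 3"
    proof -
      have "3 * L / e < real (Suc q)" unfolding q_def by linarith
      then show ?thesis using \<open>0 < e\<close> by (simp add: L_def field_simps)
    qed
    finally have small: "(t - \<tau>) * L < e / 3" .
    define k where "k = prod_encode (i, prod_encode (p, q))"
    have "Cauchy (\<lambda>n. sample k (sub n))" using convergent_sample_sub[of k]
      by (simp add: Cauchy_convergent_iff)
    then obtain M1 where M1: "\<forall>m\<ge>M1. \<forall>n\<ge>M1. norm (sample k (sub m) - sample k (sub n)) < e/3"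
      unfolding Cauchy_iff using \<open>0 < e\<close> by (meson divide_pos_pos zero_less_numeral)
    obtain M2 where M2: "\<forall>n\<ge>M2. T + 1 \<le> real (sub n)" using sub_eventually_ge by blast
    have near: "\<bar>interp (sub n) t i - sample k (sub n)\<bar> < e/3" if "n \<ge> M2" for n
    proof -
      have "T + 1 \<le> real (sub n)" using M2 that by simp
      then have "\<tau> + 1 \<le> real (sub n)" using \<tau> by (simp add: T_def)
      then have "sample k (sub n) = interp (sub n) \<tau> i"
        unfolding k_def sample_encode \<tau>_def by simp
      moreover have "\<bar>interp (sub n) t i - interp (sub n) \<tau> i\<bar> \<le> (t - \<tau>) * \<bar>lip_const i T\<bar>"
        using interp_lipschitz_abs[of \<tau> t T "sub n" i] \<tau> \<open>T + 1 \<le> real (sub n)\<close> False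
        by (simp add: T_def)
      moreover have "(t - \<tau>) * \<bar>lip_const i T\<bar> \<le> (t - \<tau>) * L"
        using \<tau> unfolding L_def by (intro mult_left_mono) auto
      ultimately show ?thesis using small by simp
    qed
    show "\<exists>M. \<forall>m\<ge>M. \<forall>n\<ge>M. norm (interp (sub m) t i - interp (sub n) t i) < e"
    proof (intro exI[of _ "max M1 M2"] allI impI)
      fix m n assume "max M1 M2 \<le> m" "max M1 M2 \<le> n"
      then show "norm (interp (sub m) t i - interp (sub n) t i) < e"
        using M1 near[of m] near[of n] unfolding real_norm_def abs_less_iff by fastforce
    qed
  qed
  then show ?thesis by (simp add: Cauchy_convergent_iff)
qed

definition Csol :: "real \<Rightarrow> nat \<Rightarrow> real" where "Csol t i = lim (\<lambda>n. interp (sub n) t i)"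

lemma Csol_lim: "0 \<le> t \<Longrightarrow> (\<lambda>n. interp (sub n) t i) \<longlonglongrightarrow> Csol t i"
  unfolding Csol_def using interp_sub_convergent by (simp add: convergent_LIMSEQ_iff)

lemma Csol_le:
  assumes t0: "0 \<le> t" and ev: "\<And>N. T \<le> real N \<Longrightarrow> interp N t i \<le> B"
  shows "Csol t i \<le> B"
proof (rule LIMSEQ_le_const2[OF Csol_lim[OF t0]])
  obtain M where "\<forall>n\<ge>M. T \<le> real (sub n)" using sub_eventually_ge by blast
  then show "\<exists>M. \<forall>n\<ge>M. interp (sub n) t i \<le> B" using ev by blast
qed

lemma Csol_ge:
  assumes t0: "0 \<le> t" and ev: "\<And>N. T \<le> real N \<Longrightarrow> B \<le> interp N t i"
  shows "B \<le> Csol t i"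
proof (rule LIMSEQ_le_const[OF Csol_lim[OF t0]])
  obtain M where "\<forall>n\<ge>M. T \<le> real (sub n)" using sub_eventually_ge by blast
  then show "\<exists>M. \<forall>n\<ge>M. B \<le> interp (sub n) t i" using ev by blast
qed

lemma Csol_nonneg: "0 \<le> t \<Longrightarrow> 0 \<le> Csol t i"
  by (rule Csol_ge[where T="t+1"]) (use interp_component_bounds[of t t] in auto)

lemma Csol_0: assumes "i \<ge> 1" shows "Csol 0 i = c0 i"
proof -
  have "interp N 0 i = c0 i" if "real i \<le> real N" for N
  proof -
    have "grid N 0 = 0" unfolding grid_def by simp
    then show ?thesis using that assms unfolding interp_def by (simp add: euler_0 init_tr_def)
  qed
  then have "Csol 0 i \<le> c0 i" "c0 i \<le> Csol 0 i"
    by (auto intro: Csol_le[where T="real i"] Csol_ge[where T="real i"])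
  then show ?thesis by simp
qed

lemma Csol_lipschitz:
  assumes s0: "0 \<le> s" and st: "s \<le> t" and tT: "t \<le> T" and i1: "i \<ge> 1"
  shows "\<bar>Csol t i - Csol s i\<bar> \<le> (t - s) * \<bar>lip_const i T\<bar>"
proof -
  have t0: "0 \<le> t" using s0 st by simp
  have "(\<lambda>n. interp (sub n) t i - interp (sub n) s i) \<longlonglongrightarrow> Csol t i - Csol s i"
    by (intro tendsto_diff Csol_lim s0 t0)
  then have lim: "(\<lambda>n. \<bar>interp (sub n) t i - interp (sub n) s i\<bar>) \<longlonglongrightarrow> \<bar>Csol t i - Csol s i\<bar>"
    by (rule tendsto_rabs)
  show ?thesis
  proof (rule LIMSEQ_le_const2[OF lim])
    obtain M where "\<forall>n\<ge>M. T \<le> real (sub n)" using sub_eventually_ge by blast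
    then show "\<exists>M. \<forall>n\<ge>M. \<bar>interp (sub n) t i - interp (sub n) s i\<bar> \<le> (t - s) * \<bar>lip_const i T\<bar>"
      using interp_lipschitz_abs[OF s0 st tT _ i1] by blast
  qed
qed

lemma interp_weighted_sum_le:
  assumes w: "admissible_weight a K w" and "0 \<le> K"
    and W0: "\<And>N. (\<Sum>i\<in>{2..N}. w i * c0 i) \<le> W0"
    and t0: "0 \<le> t" and tT: "t \<le> T" and TN: "T + 1 \<le> real N" and F: "finite F"
  shows "(\<Sum>i\<in>F. w i * interp N t i) \<le> w 1 * C1_bound (T+1) + moment_bound w K W0 (T+1)"
proof -
  define n where "n = grid N t"
  have n1: "real n * step N \<le> T + 1" using grid_bounds(1)[OF t0, of N] tT unfolding n_def by simp
  have n2: "real (Suc n) * step N \<le> T + 1"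
    using grid_bounds(1)[OF t0, of N] tT step_le_1[of N] unfolding n_def by (simp add: algebra_simps)
  have m1: "(\<Sum>i\<in>{2..N}. w i * euler N n i) \<le> moment_bound w K W0 (T+1)"
    by (rule euler_moment_le[OF w \<open>0 \<le> K\<close> W0 TN n1])
  have m2: "(\<Sum>i\<in>{2..N}. w i * euler N (Suc n) i) \<le> moment_bound w K W0 (T+1)"
    by (rule euler_moment_le[OF w \<open>0 \<le> K\<close> W0 TN n2])
  have "(\<Sum>i\<in>{2..N}. w i * interp N t i) \<le> moment_bound w K W0 (T+1)"
    by (rule interp_sum_le_of_nodes[OF t0]) (use m1 m2 n_def in auto)
  moreover have "w 1 * interp N t 1 \<le> w 1 * C1_bound (T+1)"
    using interp_moment_bounded[OF t0 tT TN] w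
    by (intro mult_left_mono) (auto simp: admissible_weight_def moment_bounded_def)
  moreover have "(\<Sum>i\<in>F. w i * interp N t i) \<le> w 1 * interp N t 1 + (\<Sum>i\<in>{2..N}. w i * interp N t i)"
    using w by (intro interp_finite_sum_le[OF t0 tT TN F]) (auto simp: admissible_weight_def)
  ultimately show ?thesis by simp
qed

lemma Csol_weighted_sum_le:
  assumes w: "admissible_weight a K w" and "0 \<le> K"
    and W0: "\<And>N. (\<Sum>i\<in>{2..N}. w i * c0 i) \<le> W0"
    and t0: "0 \<le> t" and tT: "t \<le> T" and F: "finite F"
  shows "(\<Sum>i\<in>F. w i * Csol t i) \<le> w 1 * C1_bound (T+1) + moment_bound w K W0 (T+1)"
proof (rule LIMSEQ_le_const2)
  show "(\<lambda>n. \<Sum>i\<in>F. w i * interp (sub n) t i) \<longlonglongrightarrow> (\<Sum>i\<in>F. w i * Csol t i)"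
    by (intro tendsto_sum tendsto_mult_left Csol_lim t0)
  obtain M where "\<forall>n\<ge>M. T + 1 \<le> real (sub n)" using sub_eventually_ge by blast
  then show "\<exists>M. \<forall>n\<ge>M. (\<Sum>i\<in>F. w i * interp (sub n) t i) \<le> w 1 * C1_bound (T+1)
      + moment_bound w K W0 (T+1)"
    using interp_weighted_sum_le[OF w \<open>0 \<le> K\<close> W0 t0 tT _ F] by blast
qed

lemma interp_g_sum_le:
  "0 \<le> t \<Longrightarrow> t \<le> T \<Longrightarrow> T + 1 \<le> real N \<Longrightarrow> finite F \<Longrightarrow>
    (\<Sum>i\<in>F. g i * interp N t i) \<le> g_total_bound T"
  unfolding g_total_bound_def g_moment_bound_def
    by (rule interp_weighted_sum_le[OF g_admissible Kg_nonneg g_c0_sum_le])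

lemma Csol_g_sum_le: "0 \<le> t \<Longrightarrow> t \<le> T \<Longrightarrow> finite F \<Longrightarrow> (\<Sum>i\<in>F. g i * Csol t i) \<le> g_total_bound T"
  unfolding g_total_bound_def g_moment_bound_def
    by (rule Csol_weighted_sum_le[OF g_admissible Kg_nonneg g_c0_sum_le])

lemma weighted_tail_le:
  fixes y :: "nat \<Rightarrow> real"
  assumes nn: "\<And>i. 0 \<le> y i" and bound: "(\<Sum>i\<in>F. g i * y i) \<le> B" and M: "0 < M"
    and K0: "\<forall>i\<ge>K0. M * real i powr \<alpha> \<le> g i" and F: "F \<subseteq> {K0..}"
  shows "(\<Sum>i\<in>F. real i powr \<alpha> * y i) \<le> B / M"
proof -
  have "(\<Sum>i\<in>F. real i powr \<alpha> * y i) \<le> (\<Sum>i\<in>F. (g i / M) * y i)"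
  proof (rule sum_mono)
    fix i assume "i \<in> F"
    then have "M * real i powr \<alpha> \<le> g i" using K0 F by auto
    then have "real i powr \<alpha> \<le> g i / M" using M by (simp add: field_simps)
    then show "real i powr \<alpha> * y i \<le> g i / M * y i" using nn by (intro mult_right_mono) auto
  qed
  also have "\<dots> = (\<Sum>i\<in>F. g i * y i) / M" by (simp add: sum_divide_distrib)
  also have "\<dots> \<le> B / M" using bound M by (simp add: divide_right_mono)
  finally show ?thesis .
qed

lemma g_dominates_powr: "0 < M \<Longrightarrow> \<exists>K0\<ge>1. \<forall>i\<ge>K0. M * real i powr \<alpha> \<le> g i"
proof -
  obtain K where "\<forall>i\<ge>K. M * real i powr \<alpha> \<le> g i"
    using g_superlinear[of M] by (auto simp: eventually_sequentially)
  then show ?thesis by (intro exI[of _ "max K 1"]) auto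
qed

lemma Csol_lipschitz_sym:
  assumes "0 \<le> s" "s \<le> T" "0 \<le> t" "t \<le> T" "i \<ge> 1"
  shows "\<bar>Csol t i - Csol s i\<bar> \<le> \<bar>t - s\<bar> * \<bar>lip_const i T\<bar>"
proof (cases "s \<le> t")
  case True
  then show ?thesis using Csol_lipschitz[of s t T i] assms by simp
next
  case False
  then show ?thesis using Csol_lipschitz[of t s T i] assms by (simp add: abs_minus_commute)
qed

lemma Csol_in_X: assumes t0: "0 \<le> t"
  shows "(\<lambda>k. real k powr \<alpha> * \<bar>Csol t k\<bar>) summable_on {1..}"
    "infsum (\<lambda>k. real k powr \<alpha> * \<bar>Csol t k\<bar>) {1..} \<le> g_total_bound t"
proof -
  have b: "sum (\<lambda>k. real k powr \<alpha> * \<bar>Csol t k\<bar>) F \<le> g_total_bound t" if "finite F" "F \<subseteq> {1..}" for F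
  proof -
    have "sum (\<lambda>k. real k powr \<alpha> * \<bar>Csol t k\<bar>) F \<le> (\<Sum>k\<in>F. g k * Csol t k)"
    proof (rule sum_mono)
      fix k assume "k \<in> F"
      then have "k \<ge> 1" using that by auto
      then show "real k powr \<alpha> * \<bar>Csol t k\<bar> \<le> g k * Csol t k"
        using g_ge_powr[of k] Csol_nonneg[OF t0, of k]
        by (simp add: mult_right_mono)
    qed
    also have "\<dots> \<le> g_total_bound t" using Csol_g_sum_le[OF t0 order_refl that(1)] .
    finally show ?thesis .
  qed
  show "(\<lambda>k. real k powr \<alpha> * \<bar>Csol t k\<bar>) summable_on {1..}"
    by (rule nonneg_bounded_summable_on(1)[OF _ b]) auto
  show "infsum (\<lambda>k. real k powr \<alpha> * \<bar>Csol t k\<bar>) {1..} \<le> g_total_bound t"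
    by (rule nonneg_bounded_summable_on(2)[OF _ b]) auto
qed

lemma Csol_Xnorm_diff_le:
  assumes t: "0 \<le> t" "t \<le> T" and t0: "0 \<le> t0" "t0 \<le> T" and M: "0 < M" and K0: "K0 \<ge> 1"
    and gK0: "\<forall>i\<ge>K0. M * real i powr \<alpha> \<le> g i"
  shows "(\<lambda>k. real k powr \<alpha> * \<bar>Csol t k - Csol t0 k\<bar>) summable_on {1..}"
    "Xnorm \<alpha> (\<lambda>k. Csol t k - Csol t0 k) \<le> (\<Sum>k\<in>{1..<K0}. real k powr \<alpha> * \<bar>lip_const k T\<bar>) * \<bar>t - t0\<bar>
        + 2 * g_total_bound T / M"
proof -
  define f where "f k = real k powr \<alpha> * \<bar>Csol t k - Csol t0 k\<bar>" for k
  define B where "B = (\<Sum>k\<in>{1..<K0}. real k powr \<alpha> * \<bar>lip_const k T\<bar>) * \<bar>t - t0\<bar>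
      + 2 * g_total_bound T / M"
  have b: "sum f F \<le> B" if F: "finite F" "F \<subseteq> {1..}" for F
  proof -
    have "sum f F = sum f (F \<inter> {..<K0}) + sum f (F - {..<K0})" using F(1) by (rule sum.Int_Diff)
    also have "sum f (F \<inter> {..<K0}) \<le> sum f {1..<K0}"
      using F by (intro sum_mono2) (auto simp: f_def)
    also have "\<dots> \<le> (\<Sum>k\<in>{1..<K0}. real k powr \<alpha> * \<bar>lip_const k T\<bar> * \<bar>t - t0\<bar>)"
    proof (rule sum_mono)
      fix k assume "k \<in> {1..<K0}"
      then have k1: "k \<ge> 1" by simp
      have "\<bar>Csol t k - Csol t0 k\<bar> \<le> \<bar>t - t0\<bar> * \<bar>lip_const k T\<bar>"
        using Csol_lipschitz_sym[OF t0 t k1] .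
      then have "real k powr \<alpha> * \<bar>Csol t k - Csol t0 k\<bar>
          \<le> real k powr \<alpha> * (\<bar>t - t0\<bar> * \<bar>lip_const k T\<bar>)"
        by (intro mult_left_mono) auto
      then show "f k \<le> real k powr \<alpha> * \<bar>lip_const k T\<bar> * \<bar>t - t0\<bar>" unfolding f_def
        by (simp add: mult.commute mult.left_commute)
    qed
    also have "\<dots> = (\<Sum>k\<in>{1..<K0}. real k powr \<alpha> * \<bar>lip_const k T\<bar>) * \<bar>t - t0\<bar>"
      by (simp add: sum_distrib_right)
    also have "sum f (F - {..<K0})
        \<le> (\<Sum>k\<in>F - {..<K0}. real k powr \<alpha> * Csol t k) + (\<Sum>k\<in>F - {..<K0}. real k powr \<alpha> * Csol t0 k)"
      unfolding sum.distrib[symmetric] f_def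
    proof (rule sum_mono)
      fix k
      have "\<bar>Csol t k - Csol t0 k\<bar> \<le> Csol t k + Csol t0 k"
        using Csol_nonneg[OF t(1), of k] Csol_nonneg[OF t0(1), of k] by simp
      then show "real k powr \<alpha> * \<bar>Csol t k - Csol t0 k\<bar> \<le> real k powr \<alpha> * Csol t k
          + real k powr \<alpha> * Csol t0 k"
        by (simp add: distrib_left[symmetric] mult_left_mono)
    qed
    also have "(\<Sum>k\<in>F - {..<K0}. real k powr \<alpha> * Csol t k) \<le> g_total_bound T / M"
      by (rule weighted_tail_le[OF Csol_nonneg[OF t(1)] Csol_g_sum_le[OF t(1) t(2)] M gK0]) (use F in auto)
    also have "(\<Sum>k\<in>F - {..<K0}. real k powr \<alpha> * Csol t0 k) \<le> g_total_bound T / M"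
      by (rule weighted_tail_le[OF Csol_nonneg[OF t0(1)] Csol_g_sum_le[OF t0(1) t0(2)] M gK0]) (use F in auto)
    finally show ?thesis unfolding B_def by simp
  qed
  have nn: "\<And>k. 0 \<le> f k" unfolding f_def by simp
  show "(\<lambda>k. real k powr \<alpha> * \<bar>Csol t k - Csol t0 k\<bar>) summable_on {1..}"
    using nonneg_bounded_summable_on(1)[OF _ b] nn unfolding f_def by blast
  show "Xnorm \<alpha> (\<lambda>k. Csol t k - Csol t0 k) \<le> B" unfolding Xnorm_def B_def[symmetric]
    using nonneg_bounded_summable_on(2)[OF _ b] nn unfolding f_def by blast
qed

lemma g_total_bound_nonneg: "0 \<le> T \<Longrightarrow> 0 \<le> g_total_bound T"
  using Csol_g_sum_le[of 0 T "{}"] by simp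

lemma Xnorm_nonneg: "0 \<le> Xnorm \<alpha> x" unfolding Xnorm_def by (intro infsum_nonneg) simp

lemma Csol_Xnorm_continuous_eps:
  assumes t0: "0 \<le> t0" and e: "0 < e"
  shows "\<exists>d>0. \<forall>t. 0 \<le> t \<and> \<bar>t - t0\<bar> < d \<longrightarrow> Xnorm \<alpha> (\<lambda>k. Csol t k - Csol t0 k) < e"
proof -
  define T where "T = t0 + 1"
  define M where "M = 4 * (g_total_bound T + 1) / e"
  have G0': "0 \<le> g_total_bound T" using g_total_bound_nonneg[of T] t0 unfolding T_def by simp
  have M0: "0 < M" unfolding M_def using G0' e by simp
  obtain K0 where K0: "K0 \<ge> 1" "\<forall>i\<ge>K0. M * real i powr \<alpha> \<le> g i" using g_dominates_powr[OF M0]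
    by blast
  define \<Lambda> where "\<Lambda> = (\<Sum>k\<in>{1..<K0}. real k powr \<alpha> * \<bar>lip_const k T\<bar>)"
  have L0: "0 \<le> \<Lambda>" unfolding \<Lambda>_def by (intro sum_nonneg) simp
  define d where "d = min 1 (e / (2 * (\<Lambda> + 1)))"
  have d0: "0 < d" unfolding d_def using e L0 by simp
  show ?thesis
  proof (intro exI[of _ d] conjI allI impI d0)
    fix t assume ta: "0 \<le> t \<and> \<bar>t - t0\<bar> < d"
    then have tT: "t \<le> T" unfolding T_def d_def by linarith
    have "Xnorm \<alpha> (\<lambda>k. Csol t k - Csol t0 k) \<le> \<Lambda> * \<bar>t - t0\<bar> + 2 * g_total_bound T / M"
      unfolding \<Lambda>_def using Csol_Xnorm_diff_le(2)[of t T t0 M K0] ta tT t0 M0 K0 unfolding T_def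
        by simp
    also have "\<Lambda> * \<bar>t - t0\<bar> \<le> \<Lambda> * (e / (2 * (\<Lambda> + 1)))"
      using ta L0 unfolding d_def by (intro mult_left_mono) auto
    also have "\<dots> < e / 2" using L0 e by (simp add: field_simps)
    also have "2 * g_total_bound T / M = g_total_bound T * e / (2 * (g_total_bound T + 1))"
      unfolding M_def using G0' e by (simp add: field_simps)
    also have "\<dots> < e / 2" using G0' e by (simp add: field_simps)
    finally show "Xnorm \<alpha> (\<lambda>k. Csol t k - Csol t0 k) < e" by simp
  qed
qed

lemma Csol_Xnorm_continuous:
  assumes t0: "0 \<le> t0"
  shows "((\<lambda>t. Xnorm \<alpha> (\<lambda>k. Csol t k - Csol t0 k)) \<longlongrightarrow> 0) (at t0 within {0..})"
  unfolding tendsto_iff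
proof (intro allI impI)
  fix e :: real assume e: "0 < e"
  obtain d where d: "d > 0" "\<forall>t. 0 \<le> t \<and> \<bar>t - t0\<bar> < d \<longrightarrow> Xnorm \<alpha> (\<lambda>k. Csol t k - Csol t0 k) < e"
    using Csol_Xnorm_continuous_eps[OF t0 e] by blast
  show "\<forall>\<^sub>F t in at t0 within {0..}. dist (Xnorm \<alpha> (\<lambda>k. Csol t k - Csol t0 k)) 0 < e"
    unfolding eventually_at
    using d Xnorm_nonneg by (intro exI[of _ d]) (auto simp: dist_real_def)
qed

lemma Csol_a_summable:
  assumes s0: "0 \<le> s" shows "(\<lambda>j. a j * Csol s j) summable_on {1..}"
proof (rule nonneg_bounded_summable_on(1))
  show "\<And>x. x \<in> {1..} \<Longrightarrow> 0 \<le> a x * Csol s x" using a_nonneg Csol_nonneg[OF s0] by simp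
  fix F :: "nat set" assume F: "finite F" "F \<subseteq> {1..}"
  have "sum (\<lambda>j. a j * Csol s j) F \<le> (\<Sum>j\<in>F. A * (g j * Csol s j))"
  proof (rule sum_mono)
    fix j assume "j \<in> F"
    then have j: "j \<ge> 1" using F by auto
    show "a j * Csol s j \<le> A * (g j * Csol s j)" using a_le_g[OF j] Csol_nonneg[OF s0, of j]
      by (simp add: mult_right_mono mult.assoc[symmetric])
  qed
  also have "\<dots> = A * (\<Sum>j\<in>F. g j * Csol s j)" by (simp add: sum_distrib_left)
  also have "\<dots> \<le> A * g_total_bound s" using Csol_g_sum_le[OF s0 order_refl F(1)] A_nonneg
    by (intro mult_left_mono)
  finally show "sum (\<lambda>j. a j * Csol s j) F \<le> A * g_total_bound s" .
qed

lemma asum_Csol_diff_le: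
  assumes s0: "0 \<le> s" and t0: "0 \<le> t"
  shows "\<bar>asum a (Csol t) - asum a (Csol s)\<bar> \<le> A * Xnorm \<alpha> (\<lambda>k. Csol t k - Csol s k)"
proof -
  define T where "T = max s t"
  obtain K0 where K0: "K0 \<ge> 1" "\<forall>i\<ge>K0. 1 * real i powr \<alpha> \<le> g i" using g_dominates_powr[of 1] by auto
  have sX: "(\<lambda>k. real k powr \<alpha> * \<bar>Csol t k - Csol s k\<bar>) summable_on {1..}"
    using Csol_Xnorm_diff_le(1)[of t T s 1 K0] K0 s0 t0 unfolding T_def by auto
  define h where "h j = a j * Csol t j - a j * Csol s j" for j
  have hb: "\<bar>h j\<bar> \<le> A * (real j powr \<alpha> * \<bar>Csol t j - Csol s j\<bar>)" if "j \<in> {1..}" for j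
    unfolding h_def using abs_a_mult_le[of j "Csol t j - Csol s j"] that
      by (simp add: algebra_simps)
  have sA: "(\<lambda>j. A * (real j powr \<alpha> * \<bar>Csol t j - Csol s j\<bar>)) summable_on {1..}"
    using sX by (rule summable_on_cmult_right)
  have habs: "(\<lambda>j. \<bar>h j\<bar>) summable_on {1..}"
    by (rule summable_on_comparison_test[OF sA]) (use hb in auto)
  have "asum a (Csol t) - asum a (Csol s) = infsum h {1..}"
    unfolding asum_def h_def by (rule infsum_diff_real[symmetric]) (intro Csol_a_summable t0 s0)+
  also have "\<bar>\<dots>\<bar> \<le> infsum (\<lambda>j. \<bar>h j\<bar>) {1..}"
    using norm_infsum_bound[of h "{1..}"] habs by simp
  also have "\<dots> \<le> infsum (\<lambda>j. A * (real j powr \<alpha> * \<bar>Csol t j - Csol s j\<bar>)) {1..}"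
    by (rule infsum_mono[OF habs sA]) (use hb in auto)
  also have "\<dots> = A * Xnorm \<alpha> (\<lambda>k. Csol t k - Csol s k)"
    unfolding Xnorm_def by (rule infsum_cmult_right') 
  finally show ?thesis .
qed

lemma asum_Csol_continuous:
  assumes s0: "0 \<le> s0"
  shows "((\<lambda>s. asum a (Csol s)) \<longlongrightarrow> asum a (Csol s0)) (at s0 within {0..})"
proof -
  have "((\<lambda>s. asum a (Csol s) - asum a (Csol s0)) \<longlongrightarrow> 0) (at s0 within {0..})"
  proof (rule Lim_null_comparison)
    show "\<forall>\<^sub>F s in at s0 within {0..}. norm (asum a (Csol s) - asum a (Csol s0))
        \<le> A * Xnorm \<alpha> (\<lambda>k. Csol s k - Csol s0 k)"
      unfolding eventually_at_filter using asum_Csol_diff_le[OF s0]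
        by (auto intro!: always_eventually)
    show "((\<lambda>s. A * Xnorm \<alpha> (\<lambda>k. Csol s k - Csol s0 k)) \<longlongrightarrow> 0) (at s0 within {0..})"
      using tendsto_mult_left[OF Csol_Xnorm_continuous[OF s0], of A] by simp
  qed
  then show ?thesis by (rule LIM_zero_cancel)
qed

lemma Csol_component_continuous:
  assumes s0: "0 \<le> s0" and i1: "i \<ge> 1"
  shows "((\<lambda>s. Csol s i) \<longlongrightarrow> Csol s0 i) (at s0 within {0..})"
proof -
  define T where "T = s0 + 1"
  have "((\<lambda>s. Csol s i - Csol s0 i) \<longlongrightarrow> 0) (at s0 within {0..})"
  proof (rule Lim_null_comparison)
    have "\<forall>\<^sub>F s in at s0 within {0..}. s \<in> {0..} \<and> s \<le> T"
      unfolding eventually_at T_def by (intro exI[of _ 1]) (auto simp: dist_real_def)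
    then show "\<forall>\<^sub>F s in at s0 within {0..}. norm (Csol s i - Csol s0 i) \<le> \<bar>s - s0\<bar> * \<bar>lip_const i T\<bar>"
      by eventually_elim (use Csol_lipschitz_sym[OF s0 _ _ _ i1] s0 T_def in auto)
    have "((\<lambda>s. \<bar>s - s0\<bar> * \<bar>lip_const i T\<bar>) \<longlongrightarrow> \<bar>s0 - s0\<bar> * \<bar>lip_const i T\<bar>) (at s0 within {0..})"
      by (intro tendsto_intros)
    then show "((\<lambda>s. \<bar>s - s0\<bar> * \<bar>lip_const i T\<bar>) \<longlongrightarrow> 0) (at s0 within {0..})" by simp
  qed
  then show ?thesis by (rule LIM_zero_cancel)
qed

section \<open>The limit solves the system\<close>

definition consumption :: "real \<Rightarrow> real" where
  "consumption s = Csol s 1 * asum a (Csol s) + a 1 * (Csol s 1)\<^sup>2"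

definition rhs :: "nat \<Rightarrow> real \<Rightarrow> real" where
  "rhs i s = (if i = 1 then lam - consumption s else flux a b (Csol s) (i-1) - flux a b (Csol s) i)"

lemma a_weighted_tail_le:
  assumes y: "\<And>i. 0 \<le> y i" and B: "(\<Sum>i\<in>F. g i * y i) \<le> B" and "0 < M"
    and K0: "\<forall>i\<ge>K0. M * real i powr \<alpha> \<le> g i" "K0 \<ge> 1" and F: "F \<subseteq> {K0..}"
  shows "(\<Sum>j\<in>F. a j * y j) \<le> A * (B / M)"
proof -
  have "(\<Sum>j\<in>F. a j * y j) \<le> (\<Sum>j\<in>F. A * (real j powr \<alpha> * y j))"
  proof (rule sum_mono)
    fix j assume "j \<in> F"
    then have "j \<ge> 1" using F K0 by auto
    then show "a j * y j \<le> A * (real j powr \<alpha> * y j)"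
      using abs_a_mult_le[of j "y j"] y[of j] a_nonneg[of j] by simp
  qed
  also have "\<dots> = A * (\<Sum>j\<in>F. real j powr \<alpha> * y j)" by (simp add: sum_distrib_left)
  also have "\<dots> \<le> A * (B / M)"
    using weighted_tail_le[OF y B \<open>0 < M\<close> K0(1) F] A_nonneg by (intro mult_left_mono)
  finally show ?thesis .
qed

lemma asum_Csol_split:
  assumes s0: "0 \<le> s" and "0 < M" and K0: "K0 \<ge> 1" "\<forall>i\<ge>K0. M * real i powr \<alpha> \<le> g i"
  shows "asum a (Csol s) = (\<Sum>j\<in>{1..<K0}. a j * Csol s j) + (\<Sum>\<^sub>\<infinity>j\<in>{K0..}. a j * Csol s j)"
    and "0 \<le> (\<Sum>\<^sub>\<infinity>j\<in>{K0..}. a j * Csol s j)"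
    and "(\<Sum>\<^sub>\<infinity>j\<in>{K0..}. a j * Csol s j) \<le> A * (g_total_bound s / M)"
proof -
  have split: "{1..} = {1..<K0} \<union> {K0..}" using K0 by auto
  have "asum a (Csol s) = (\<Sum>\<^sub>\<infinity>j\<in>{1..<K0} \<union> {K0..}. a j * Csol s j)"
    unfolding asum_def split[symmetric] ..
  also have "\<dots> = (\<Sum>j\<in>{1..<K0}. a j * Csol s j) + (\<Sum>\<^sub>\<infinity>j\<in>{K0..}. a j * Csol s j)"
    using Csol_a_summable[OF s0] split
    by (subst infsum_Un_disjoint) (auto intro: summable_on_subset)
  finally show "asum a (Csol s) = (\<Sum>j\<in>{1..<K0}. a j * Csol s j) + (\<Sum>\<^sub>\<infinity>j\<in>{K0..}. a j * Csol s j)" .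
  have nonneg: "\<And>j. j \<in> {K0..} \<Longrightarrow> 0 \<le> a j * Csol s j"
    using a_nonneg Csol_nonneg[OF s0] K0 by simp
  then show "0 \<le> (\<Sum>\<^sub>\<infinity>j\<in>{K0..}. a j * Csol s j)" by (rule infsum_nonneg)
  show "(\<Sum>\<^sub>\<infinity>j\<in>{K0..}. a j * Csol s j) \<le> A * (g_total_bound s / M)"
    using nonneg a_weighted_tail_le[OF Csol_nonneg[OF s0] Csol_g_sum_le[OF s0 order_refl] \<open>0 < M\<close> K0(2,1)]
    by (intro nonneg_bounded_summable_on(2)) auto
qed

text \<open>The truncated sums converge although the number of terms grows: the tails beyond \<open>K0\<close>
  are uniformly small because \<open>g\<close> grows faster than \<open>i\<^sup>\<alpha>\<close>.\<close>
lemma interp_asum_lim: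
  assumes s0: "0 \<le> s"
  shows "(\<lambda>n. \<Sum>j\<in>{1..sub n}. a j * interp (sub n) s j) \<longlonglongrightarrow> asum a (Csol s)"
  unfolding LIMSEQ_iff
proof (intro allI impI)
  fix e :: real assume "0 < e"
  define G where "G = g_total_bound s"
  define M where "M = (A + 1) * (G + 1) / (e / 3)"
  have "0 \<le> G" unfolding G_def using g_total_bound_nonneg s0 by simp
  then have "0 < M" and small: "A * (G / M) < e / 3"
    unfolding M_def using A_nonneg \<open>0 < e\<close> tail_factor_small[of A G "e / 3"] by auto
  obtain K0 where K0: "K0 \<ge> 1" "\<forall>i\<ge>K0. M * real i powr \<alpha> \<le> g i"
    using g_dominates_powr[OF \<open>0 < M\<close>] by blast
  define P where "P = (\<Sum>j\<in>{1..<K0}. a j * Csol s j)"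
  note split = asum_Csol_split[OF s0 \<open>0 < M\<close> K0]
  have "(\<lambda>n. \<Sum>j\<in>{1..<K0}. a j * interp (sub n) s j) \<longlonglongrightarrow> P"
    unfolding P_def by (intro tendsto_sum tendsto_mult_left Csol_lim s0)
  then obtain n1 where n1: "\<forall>n\<ge>n1. \<bar>(\<Sum>j\<in>{1..<K0}. a j * interp (sub n) s j) - P\<bar> < e/3"
    unfolding LIMSEQ_iff using \<open>0 < e\<close> by (metis divide_pos_pos real_norm_def zero_less_numeral)
  obtain n2 where n2: "\<forall>n\<ge>n2. max (real K0) (s + 1) \<le> real (sub n)" using sub_eventually_ge by blast
  show "\<exists>no. \<forall>n\<ge>no. norm ((\<Sum>j\<in>{1..sub n}. a j * interp (sub n) s j) - asum a (Csol s)) < e"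
  proof (intro exI[of _ "max n1 n2"] allI impI)
    fix n assume n: "max n1 n2 \<le> n"
    define N where "N = sub n"
    have "K0 \<le> N" and Ns: "s + 1 \<le> real N" using n2 n unfolding N_def by auto
    have y: "\<And>j. 0 \<le> interp N s j" using interp_component_bounds(1)[OF s0 order_refl Ns] .
    have "{1..N} = {1..<K0} \<union> {K0..N}" using \<open>K0 \<le> N\<close> K0 by auto
    then have "(\<Sum>j\<in>{1..N}. a j * interp N s j)
        = (\<Sum>j\<in>{1..<K0}. a j * interp N s j) + (\<Sum>j\<in>{K0..N}. a j * interp N s j)"
      by (simp only:) (rule sum.union_disjoint, auto)
    moreover have "(\<Sum>j\<in>{K0..N}. a j * interp N s j) \<le> A * (G / M)"
      unfolding G_def using y interp_g_sum_le[OF s0 order_refl Ns, of "{K0..N}"] \<open>0 < M\<close> K0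
      by (intro a_weighted_tail_le) auto
    moreover have "0 \<le> (\<Sum>j\<in>{K0..N}. a j * interp N s j)"
      using a_nonneg y K0 by (intro sum_nonneg) auto
    moreover have "\<bar>(\<Sum>j\<in>{1..<K0}. a j * interp N s j) - P\<bar> < e/3" using n1 n unfolding N_def by simp
    ultimately show "norm ((\<Sum>j\<in>{1..sub n}. a j * interp (sub n) s j) - asum a (Csol s)) < e"
      using split small
        unfolding N_def[symmetric] P_def[symmetric] G_def[symmetric] real_norm_def abs_less_iff
      by linarith
  qed
qed

lemma rhs_tr_interp_lim:
  assumes s0: "0 \<le> s" and "i \<ge> 1"
  shows "(\<lambda>n. rhs_tr (sub n) (interp (sub n) s) i) \<longlonglongrightarrow> rhs i s"
proof -
  obtain n0 where "\<forall>n\<ge>n0. real (i + 1) \<le> real (sub n)" using sub_eventually_ge by blast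
  then have large: "\<forall>n\<ge>n0. i + 1 \<le> sub n" by (simp only: of_nat_le_iff)
  show ?thesis
  proof (cases "i = 1")
    case True
    have "rhs i s = lam - (Csol s 1 * asum a (Csol s) + a 1 * (Csol s 1 * Csol s 1))"
      using True by (simp add: rhs_def consumption_def power2_eq_square)
    then have "(\<lambda>n. lam - (interp (sub n) s 1 * (\<Sum>j\<in>{1..sub n}. a j * interp (sub n) s j)
        + a 1 * (interp (sub n) s 1 * interp (sub n) s 1))) \<longlonglongrightarrow> rhs i s"
      by (simp only:) (intro tendsto_intros Csol_lim s0 interp_asum_lim)
    moreover have "\<forall>\<^sub>F n in sequentially. lam - (interp (sub n) s 1 * (\<Sum>j\<in>{1..sub n}. a j * interp (sub n) s j)
        + a 1 * (interp (sub n) s 1 * interp (sub n) s 1)) = rhs_tr (sub n) (interp (sub n) s) i"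
      unfolding eventually_sequentially using large True
      by (intro exI[of _ n0]) (auto simp: rhs_tr_def algebra_simps)
    ultimately show ?thesis by (rule Lim_transform_eventually)
  next
    case False
    have "(\<lambda>n. flux a b (interp (sub n) s) (i - 1) - flux a b (interp (sub n) s) i) \<longlonglongrightarrow> rhs i s"
      unfolding rhs_def flux_def using False by (simp, intro tendsto_intros Csol_lim s0)
    moreover have "\<forall>\<^sub>F n in sequentially. flux a b (interp (sub n) s) (i - 1) - flux a b (interp (sub n) s) i
        = rhs_tr (sub n) (interp (sub n) s) i"
      unfolding eventually_sequentially using large False \<open>i \<ge> 1\<close>
      by (intro exI[of _ n0]) (simp add: rhs_tr_eq_flux)
    ultimately show ?thesis by (rule Lim_transform_eventually)
  qed
qed

lemma interp_lipschitz_sym: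
  assumes "0 \<le> \<tau>" "\<tau> \<le> T" "0 \<le> \<tau>'" "\<tau>' \<le> T" "T \<le> real N" "j \<ge> 1"
  shows "\<bar>interp N \<tau> j - interp N \<tau>' j\<bar> \<le> \<bar>\<tau> - \<tau>'\<bar> * \<bar>lip_const j T\<bar>"
proof (cases "\<tau>' \<le> \<tau>")
  case True
  then show ?thesis using interp_lipschitz_abs[of \<tau>' \<tau> T N j] assms by simp
next
  case False
  then show ?thesis using interp_lipschitz_abs[of \<tau> \<tau>' T N j] assms by (simp add: abs_minus_commute)
qed

lemma interp_pair_bounds:
  assumes "0 \<le> \<tau>" "\<tau> \<le> T" "0 \<le> \<tau>'" "\<tau>' \<le> T" "T + 1 \<le> real N"
  shows "0 \<le> interp N \<tau> j" "interp N \<tau> j \<le> sup_bound (T+1)"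
    and "j \<ge> 1 \<Longrightarrow> \<bar>interp N \<tau> j - interp N \<tau>' j\<bar> \<le> \<bar>\<tau> - \<tau>'\<bar> * \<bar>lip_const j T\<bar>"
  using interp_component_bounds[of \<tau> T N j] interp_lipschitz_sym[of \<tau> T \<tau>' N j] assms by auto

lemma rhs_tr_interp_diff_mid:
  fixes N i :: nat and \<tau> \<tau>' T :: real
  assumes i: "2 \<le> i" "i + 1 \<le> N"
    and \<tau>: "0 \<le> \<tau>" "\<tau> \<le> T" "0 \<le> \<tau>'" "\<tau>' \<le> T" and TN: "T + 1 \<le> real N"
  defines "R \<equiv> sup_bound (T+1)" and "L \<equiv> \<lambda>j. \<bar>lip_const j T\<bar>"
  shows "\<bar>rhs_tr N (interp N \<tau>) i - rhs_tr N (interp N \<tau>') i\<bar>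
    \<le> (a (i-1) * R * (L 1 + L (i-1)) + b i * L i + a i * R * (L 1 + L i) + b (i+1) * L (i+1)) * \<bar>\<tau> - \<tau>'\<bar>"
proof -
  define z z' where "z = interp N \<tau>" and "z' = interp N \<tau>'"
  note bounds = interp_pair_bounds[OF \<tau> TN] interp_pair_bounds[OF \<tau>(3,4,1,2) TN]
  have ab: "0 \<le> a (i-1)" "0 \<le> a i" "0 \<le> b i" "0 \<le> b (i+1)" using a_nonneg b_nonneg i by auto
  have "0 \<le> R" unfolding R_def using \<tau> by (intro sup_bound_nonneg) simp
  have dz: "\<bar>z j - z' j\<bar> \<le> \<bar>\<tau> - \<tau>'\<bar> * L j" if "j \<ge> 1" for j
    using bounds(3)[OF that] by (simp add: z_def z'_def L_def)
  have prod: "\<bar>z 1 * z j - z' 1 * z' j\<bar> \<le> R * (\<bar>\<tau> - \<tau>'\<bar> * L 1 + \<bar>\<tau> - \<tau>'\<bar> * L j)" if "j \<ge> 1" for j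
  proof -
    have "\<bar>z 1 * z j - z' 1 * z' j\<bar> \<le> R * (\<bar>z 1 - z' 1\<bar> + \<bar>z j - z' j\<bar>)"
      using bounds by (intro abs_mult_diff_le) (auto simp: z_def z'_def R_def)
    also have "\<dots> \<le> R * (\<bar>\<tau> - \<tau>'\<bar> * L 1 + \<bar>\<tau> - \<tau>'\<bar> * L j)"
      using dz[of 1] dz[OF that] \<open>0 \<le> R\<close> by (intro mult_left_mono add_mono) auto
    finally show ?thesis .
  qed
  have "rhs_tr N z i - rhs_tr N z' i
      = a (i-1) * (z 1 * z (i-1) - z' 1 * z' (i-1)) - b i * (z i - z' i)
      - a i * (z 1 * z i - z' 1 * z' i) + b (i+1) * (z (i+1) - z' (i+1))"
    using rhs_tr_mid_eq[OF i, of z] rhs_tr_mid_eq[OF i, of z'] by (simp add: algebra_simps)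
  then have "\<bar>rhs_tr N z i - rhs_tr N z' i\<bar> \<le> a (i-1) * \<bar>z 1 * z (i-1) - z' 1 * z' (i-1)\<bar>
      + b i * \<bar>z i - z' i\<bar> + a i * \<bar>z 1 * z i - z' 1 * z' i\<bar> + b (i+1) * \<bar>z (i+1) - z' (i+1)\<bar>"
    using abs_four_terms_le[OF ab(1) ab(3) ab(2) ab(4)] by simp
  also have "\<dots> \<le> a (i-1) * (R * (\<bar>\<tau> - \<tau>'\<bar> * L 1 + \<bar>\<tau> - \<tau>'\<bar> * L (i-1))) + b i * (\<bar>\<tau> - \<tau>'\<bar> * L i)
      + a i * (R * (\<bar>\<tau> - \<tau>'\<bar> * L 1 + \<bar>\<tau> - \<tau>'\<bar> * L i)) + b (i+1) * (\<bar>\<tau> - \<tau>'\<bar> * L (i+1))"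
    using i ab by (intro add_mono mult_left_mono prod dz) auto
  also have "\<dots> = (a (i-1) * R * (L 1 + L (i-1)) + b i * L i + a i * R * (L 1 + L i)
      + b (i+1) * L (i+1))
      * \<bar>\<tau> - \<tau>'\<bar>"
    by (simp add: algebra_simps)
  finally show ?thesis by (simp add: z_def z'_def)
qed

text \<open>Splitting the truncated sum at \<open>K0\<close>: the head is Lipschitz in time, the tail is small
  uniformly in \<open>N\<close>.\<close>
lemma asum_tr_interp_diff_le:
  assumes "0 < M" and K0: "K0 \<ge> 1" "\<forall>i\<ge>K0. M * real i powr \<alpha> \<le> g i"
    and \<tau>: "0 \<le> \<tau>" "\<tau> \<le> T" "0 \<le> \<tau>'" "\<tau>' \<le> T" and TN: "T + 1 \<le> real N"
  shows "\<bar>(\<Sum>j\<in>{1..N}. a j * interp N \<tau> j) - (\<Sum>j\<in>{1..N}. a j * interp N \<tau>' j)\<bar>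
    \<le> (\<Sum>j\<in>{1..<K0}. a j * \<bar>lip_const j T\<bar>) * \<bar>\<tau> - \<tau>'\<bar> + 2 * A * (g_total_bound T / M)"
proof -
  define z z' where "z = interp N \<tau>" and "z' = interp N \<tau>'"
  note bounds = interp_pair_bounds[OF \<tau> TN] interp_pair_bounds[OF \<tau>(3,4,1,2) TN]
  define F1 F2 where "F1 = {1..N} \<inter> {..<K0}" and "F2 = {1..N} - {..<K0}"
  have "(\<Sum>j\<in>{1..N}. a j * z j) - (\<Sum>j\<in>{1..N}. a j * z' j) = (\<Sum>j\<in>{1..N}. a j * (z j - z' j))"
    by (simp add: sum_subtractf algebra_simps)
  also have "\<dots> = (\<Sum>j\<in>F1. a j * (z j - z' j)) + (\<Sum>j\<in>F2. a j * (z j - z' j))"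
    unfolding F1_def F2_def by (rule sum.Int_Diff) simp
  finally have split: "(\<Sum>j\<in>{1..N}. a j * z j) - (\<Sum>j\<in>{1..N}. a j * z' j)
      = (\<Sum>j\<in>F1. a j * (z j - z' j)) + (\<Sum>j\<in>F2. a j * (z j - z' j))" .
  have "\<bar>\<Sum>j\<in>F1. a j * (z j - z' j)\<bar> \<le> (\<Sum>j\<in>{1..<K0}. a j * \<bar>lip_const j T\<bar>) * \<bar>\<tau> - \<tau>'\<bar>"
  proof -
    have "\<bar>\<Sum>j\<in>F1. a j * (z j - z' j)\<bar> \<le> (\<Sum>j\<in>F1. a j * (\<bar>\<tau> - \<tau>'\<bar> * \<bar>lip_const j T\<bar>))"
      using a_nonneg bounds(3) unfolding F1_def z_def z'_def
      by (intro order_trans[OF sum_abs sum_mono]) (auto simp: abs_mult intro: mult_left_mono)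
    also have "\<dots> \<le> (\<Sum>j\<in>{1..<K0}. a j * (\<bar>\<tau> - \<tau>'\<bar> * \<bar>lip_const j T\<bar>))"
      using a_nonneg by (intro sum_mono2) (auto simp: F1_def)
    also have "\<dots> = (\<Sum>j\<in>{1..<K0}. a j * \<bar>lip_const j T\<bar>) * \<bar>\<tau> - \<tau>'\<bar>"
      by (simp add: sum_distrib_left sum_distrib_right mult.left_commute mult.commute)
    finally show ?thesis .
  qed
  moreover have "\<bar>\<Sum>j\<in>F2. a j * (z j - z' j)\<bar> \<le> 2 * A * (g_total_bound T / M)"
  proof -
    have "F2 \<subseteq> {K0..}" "finite F2" unfolding F2_def by auto
    have zz: "\<bar>z j - z' j\<bar> \<le> z j + z' j" for j
      using bounds(1)[of j] bounds(4)[of j] by (auto simp: z_def z'_def)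
    have "\<bar>\<Sum>j\<in>F2. a j * (z j - z' j)\<bar> \<le> (\<Sum>j\<in>F2. a j * z j) + (\<Sum>j\<in>F2. a j * z' j)"
      using a_nonneg zz unfolding F2_def sum.distrib[symmetric]
      by (intro order_trans[OF sum_abs sum_mono]) (auto simp: abs_mult distrib_left[symmetric] intro!: mult_left_mono)
    also have "\<dots> \<le> A * (g_total_bound T / M) + A * (g_total_bound T / M)"
      using bounds interp_g_sum_le[OF \<tau>(1,2) TN \<open>finite F2\<close>] interp_g_sum_le[OF \<tau>(3,4) TN \<open>finite F2\<close>]
        \<open>F2 \<subseteq> {K0..}\<close> \<open>0 < M\<close> K0 unfolding z_def z'_def
      by (intro add_mono a_weighted_tail_le) auto
    finally show ?thesis by simp
  qed
  ultimately show ?thesis using split unfolding z_def z'_def by linarith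
qed

lemma rhs_tr_interp_diff_1:
  fixes N K0 :: nat and \<tau> \<tau>' T M :: real
  assumes "0 < M" and K0: "K0 \<ge> 1" "\<forall>i\<ge>K0. M * real i powr \<alpha> \<le> g i" and "2 \<le> N"
    and \<tau>: "0 \<le> \<tau>" "\<tau> \<le> T" "0 \<le> \<tau>'" "\<tau>' \<le> T" and TN: "T + 1 \<le> real N"
  defines "R \<equiv> sup_bound (T+1)" and "L \<equiv> \<lambda>j. \<bar>lip_const j T\<bar>"
  shows "\<bar>rhs_tr N (interp N \<tau>) 1 - rhs_tr N (interp N \<tau>') 1\<bar>
    \<le> (R * (\<Sum>j\<in>{1..<K0}. a j * L j) + A * R * L 1 + 2 * a 1 * R * L 1) * \<bar>\<tau> - \<tau>'\<bar>
      + R * (2 * A * (g_total_bound T / M))"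
proof -
  define z z' where "z = interp N \<tau>" and "z' = interp N \<tau>'"
  define S S' where "S = (\<Sum>j\<in>{1..N}. a j * z j)" and "S' = (\<Sum>j\<in>{1..N}. a j * z' j)"
  note bounds = interp_pair_bounds[OF \<tau> TN] interp_pair_bounds[OF \<tau>(3,4,1,2) TN]
  have "0 \<le> R" unfolding R_def using \<tau> by (intro sup_bound_nonneg) simp
  have dz1: "\<bar>z 1 - z' 1\<bar> \<le> \<bar>\<tau> - \<tau>'\<bar> * L 1" using bounds(3)[of 1] by (simp add: z_def z'_def L_def)
  have S': "0 \<le> S'" "S' \<le> A * R"
    using a_nonneg bounds moment_bounded_asum_le[OF interp_moment_bounded[OF \<tau>(3,4) TN]]
    unfolding S'_def z'_def R_def by (auto intro: sum_nonneg)
  have "rhs_tr N z 1 - rhs_tr N z' 1 = - (z 1 * S - z' 1 * S') - a 1 * (z 1 * z 1 - z' 1 * z' 1)"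
    using rhs_tr_1_eq[of N z] rhs_tr_1_eq[of N z'] \<open>2 \<le> N\<close> unfolding S_def S'_def
    by (simp add: algebra_simps)
  then have "\<bar>rhs_tr N z 1 - rhs_tr N z' 1\<bar>
      \<le> \<bar>z 1 * S - z' 1 * S'\<bar> + a 1 * \<bar>z 1 * z 1 - z' 1 * z' 1\<bar>"
    using abs_triangle_ineq4[of "- (z 1 * S - z' 1 * S')" "a 1 * (z 1 * z 1 - z' 1 * z' 1)"]
      a1_nonneg
    by (simp add: abs_mult)
  also have "\<dots> \<le> (R * \<bar>S - S'\<bar> + \<bar>z 1 - z' 1\<bar> * (A * R))
      + a 1 * (R * (\<bar>z 1 - z' 1\<bar> + \<bar>z 1 - z' 1\<bar>))"
  proof (intro add_mono mult_left_mono a1_nonneg)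
    have "z 1 * S - z' 1 * S' = z 1 * (S - S') + (z 1 - z' 1) * S'" by (simp add: algebra_simps)
    then have "\<bar>z 1 * S - z' 1 * S'\<bar> \<le> \<bar>z 1\<bar> * \<bar>S - S'\<bar> + \<bar>z 1 - z' 1\<bar> * \<bar>S'\<bar>"
      by (metis abs_mult abs_triangle_ineq)
    also have "\<dots> \<le> R * \<bar>S - S'\<bar> + \<bar>z 1 - z' 1\<bar> * (A * R)"
      using bounds S' \<open>0 \<le> R\<close> unfolding z_def R_def by (intro add_mono mult_mono) auto
    finally show "\<bar>z 1 * S - z' 1 * S'\<bar> \<le> R * \<bar>S - S'\<bar> + \<bar>z 1 - z' 1\<bar> * (A * R)" .
    show "\<bar>z 1 * z 1 - z' 1 * z' 1\<bar> \<le> R * (\<bar>z 1 - z' 1\<bar> + \<bar>z 1 - z' 1\<bar>)"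
      using bounds by (intro abs_mult_diff_le) (auto simp: z_def z'_def R_def)
  qed
  also have "\<dots> \<le> (R * ((\<Sum>j\<in>{1..<K0}. a j * L j) * \<bar>\<tau> - \<tau>'\<bar> + 2 * A * (g_total_bound T / M))
      + (\<bar>\<tau> - \<tau>'\<bar> * L 1) * (A * R)) + a 1 * (R * (\<bar>\<tau> - \<tau>'\<bar> * L 1 + \<bar>\<tau> - \<tau>'\<bar> * L 1))"
    using asum_tr_interp_diff_le[OF \<open>0 < M\<close> K0 \<tau> TN] dz1 \<open>0 \<le> R\<close> A_nonneg a1_nonneg
    unfolding S_def S'_def z_def z'_def L_def
    by (intro add_mono mult_left_mono mult_right_mono) auto
  also have "\<dots> = (R * (\<Sum>j\<in>{1..<K0}. a j * L j) + A * R * L 1 + 2 * a 1 * R * L 1) * \<bar>\<tau> - \<tau>'\<bar>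
      + R * (2 * A * (g_total_bound T / M))"
    by (simp add: algebra_simps)
  finally show ?thesis by (simp add: z_def z'_def)
qed

lemma rhs_tr_equicont:
  assumes T0: "0 \<le> T" and "i \<ge> 1" and "0 < e"
  shows "\<exists>d>0. \<forall>N \<tau> \<tau>'. T + 1 \<le> real N \<and> i + 1 \<le> N \<and> 0 \<le> \<tau> \<and> \<tau> \<le> T \<and> 0 \<le> \<tau>' \<and> \<tau>' \<le> T \<and>
      \<bar>\<tau> - \<tau>'\<bar> \<le> d \<longrightarrow> \<bar>rhs_tr N (interp N \<tau>) i - rhs_tr N (interp N \<tau>') i\<bar> \<le> e"
proof -
  define R L where "R = sup_bound (T+1)" and "L = (\<lambda>j. \<bar>lip_const j T\<bar>)"
  have "0 \<le> R" unfolding R_def using T0 by (intro sup_bound_nonneg) simp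
  have lip: "\<exists>d>0. \<forall>N \<tau> \<tau>'. T + 1 \<le> real N \<and> i + 1 \<le> N \<and> 0 \<le> \<tau> \<and> \<tau> \<le> T \<and> 0 \<le> \<tau>' \<and> \<tau>' \<le> T \<and>
      \<bar>\<tau> - \<tau>'\<bar> \<le> d \<longrightarrow> \<bar>rhs_tr N (interp N \<tau>) i - rhs_tr N (interp N \<tau>') i\<bar> \<le> e"
    if "0 \<le> \<Lambda>" and "0 \<le> \<epsilon>" and "\<epsilon> < e"
      and bound: "\<And>N \<tau> \<tau>'. T + 1 \<le> real N \<Longrightarrow> i + 1 \<le> N \<Longrightarrow> 0 \<le> \<tau> \<Longrightarrow> \<tau> \<le> T \<Longrightarrow> 0 \<le> \<tau>' \<Longrightarrow> \<tau>' \<le> T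
        \<Longrightarrow> \<bar>rhs_tr N (interp N \<tau>) i - rhs_tr N (interp N \<tau>') i\<bar> \<le> \<Lambda> * \<bar>\<tau> - \<tau>'\<bar> + \<epsilon>"
    for \<Lambda> \<epsilon>
  proof (intro exI[of _ "(e - \<epsilon>) / (\<Lambda> + 1)"] conjI allI impI)
    show "0 < (e - \<epsilon>) / (\<Lambda> + 1)" using that by simp
    fix N \<tau> \<tau>'
    assume H: "T + 1 \<le> real N \<and> i + 1 \<le> N \<and> 0 \<le> \<tau> \<and> \<tau> \<le> T \<and> 0 \<le> \<tau>' \<and> \<tau>' \<le> T \<and>
      \<bar>\<tau> - \<tau>'\<bar> \<le> (e - \<epsilon>) / (\<Lambda> + 1)"
    have "\<Lambda> * \<bar>\<tau> - \<tau>'\<bar> \<le> \<Lambda> * ((e - \<epsilon>) / (\<Lambda> + 1))" using H that by (intro mult_left_mono) auto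
    also have "\<dots> \<le> e - \<epsilon>" using that by (simp add: field_simps)
    finally show "\<bar>rhs_tr N (interp N \<tau>) i - rhs_tr N (interp N \<tau>') i\<bar> \<le> e"
      using bound[of N \<tau> \<tau>'] H by linarith
  qed
  show ?thesis
  proof (cases "i = 1")
    case True
    define G where "G = g_total_bound T"
    define M where "M = (2 * A * R + 1) * (G + 1) / (e / 2)"
    have "0 \<le> G" unfolding G_def using g_total_bound_nonneg T0 by simp
    moreover have "0 \<le> 2 * A * R" using A_nonneg \<open>0 \<le> R\<close> by simp
    ultimately have "0 < M" and small: "(2 * A * R) * (G / M) < e / 2"
      unfolding M_def using \<open>0 < e\<close> tail_factor_small[of "2 * A * R" G "e / 2"]
      by (auto intro!: divide_pos_pos mult_pos_pos)
    obtain K0 where K0: "K0 \<ge> 1" "\<forall>i\<ge>K0. M * real i powr \<alpha> \<le> g i"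
      using g_dominates_powr[OF \<open>0 < M\<close>] by blast
    define \<Lambda> where "\<Lambda> = R * (\<Sum>j\<in>{1..<K0}. a j * L j) + A * R * L 1 + 2 * a 1 * R * L 1"
    show ?thesis
    proof (rule lip[of \<Lambda> "R * (2 * A * (G / M))"])
      show "0 \<le> \<Lambda>"
        unfolding \<Lambda>_def using \<open>0 \<le> R\<close> A_nonneg a_nonneg a1_nonneg
        by (auto simp: L_def intro!: sum_nonneg add_nonneg_nonneg mult_nonneg_nonneg)
      show "0 \<le> R * (2 * A * (G / M))" using \<open>0 \<le> R\<close> A_nonneg \<open>0 \<le> G\<close> \<open>0 < M\<close> by simp
      have "R * (2 * A * (G / M)) = (2 * A * R) * (G / M)" by (simp add: mult_ac)
      then show "R * (2 * A * (G / M)) < e" using small \<open>0 < e\<close> by linarith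
      fix N \<tau> \<tau>' assume "T + 1 \<le> real N" "i + 1 \<le> N" "0 \<le> \<tau>" "\<tau> \<le> T" "0 \<le> \<tau>'" "\<tau>' \<le> T"
      then show "\<bar>rhs_tr N (interp N \<tau>) i - rhs_tr N (interp N \<tau>') i\<bar> \<le> \<Lambda> * \<bar>\<tau> - \<tau>'\<bar>
          + R * (2 * A * (G / M))"
        using rhs_tr_interp_diff_1[OF \<open>0 < M\<close> K0, of N \<tau> T \<tau>'] True
        unfolding \<Lambda>_def R_def L_def G_def by simp
    qed
  next
    case False
    define \<Lambda> where
      "\<Lambda> = a (i-1) * R * (L 1 + L (i-1)) + b i * L i + a i * R * (L 1 + L i) + b (i+1) * L (i+1)"
    show ?thesis
    proof (rule lip[of \<Lambda> 0])
      show "0 \<le> \<Lambda>"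
        unfolding \<Lambda>_def using \<open>0 \<le> R\<close> a_nonneg b_nonneg \<open>i \<ge> 1\<close> False by (auto simp: L_def)
      fix N \<tau> \<tau>' assume "T + 1 \<le> real N" "i + 1 \<le> N" "0 \<le> \<tau>" "\<tau> \<le> T" "0 \<le> \<tau>'" "\<tau>' \<le> T"
      then show "\<bar>rhs_tr N (interp N \<tau>) i - rhs_tr N (interp N \<tau>') i\<bar> \<le> \<Lambda> * \<bar>\<tau> - \<tau>'\<bar> + 0"
        using rhs_tr_interp_diff_mid[of i N \<tau> T \<tau>'] \<open>i \<ge> 1\<close> False
        unfolding \<Lambda>_def R_def L_def by simp
    qed (use \<open>0 < e\<close> in simp_all)
  qed
qed

lemma euler_eq_interp: "euler N m = interp N (real m * step N)"
  by (rule ext) (simp add: interp_node)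

text \<open>First-order expansion of the interpolant around \<open>s\<close>: every slope used between \<open>s\<close> and
  \<open>y\<close> is the vector field at a grid time within \<open>\<delta>\<close> of \<open>s\<close>.\<close>
lemma interp_first_order:
  assumes close: "\<And>\<tau>. 0 \<le> \<tau> \<Longrightarrow> \<tau> \<le> T \<Longrightarrow> \<bar>\<tau> - s\<bar> \<le> \<delta> \<Longrightarrow>
      \<bar>rhs_tr N (interp N \<tau>) i - rhs_tr N (interp N s) i\<bar> \<le> \<epsilon>"
    and "0 \<le> s" "0 \<le> y" "s \<le> T" "y \<le> T" "\<bar>y - s\<bar> \<le> \<delta> / 2" "step N \<le> \<delta> / 2"
  shows "\<bar>interp N y i - interp N s i - (y - s) * rhs_tr N (interp N s) i\<bar> \<le> \<bar>y - s\<bar> * \<epsilon>"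
proof -
  define c lo hi where "c = rhs_tr N (interp N s) i" and "lo = min y s" and "hi = max y s"
  have "0 \<le> lo" "lo \<le> hi" unfolding lo_def hi_def using assms by auto
  have "\<bar>interp N hi i - interp N lo i - (hi - lo) * c\<bar> \<le> (hi - lo) * \<epsilon>"
  proof (rule interp_increment[OF \<open>0 \<le> lo\<close> \<open>lo \<le> hi\<close>])
    fix m assume m: "grid N lo \<le> m" "m \<le> grid N hi"
    define \<tau> where "\<tau> = real m * step N"
    have "real (grid N lo) * step N \<le> \<tau>" "\<tau> \<le> real (grid N hi) * step N"
      unfolding \<tau>_def using m step_pos[of N] by (auto intro: mult_right_mono)
    moreover have "lo < (real (grid N lo) + 1) * step N" "real (grid N hi) * step N \<le> hi"
      using grid_bounds[OF \<open>0 \<le> lo\<close>] grid_bounds[of hi N] \<open>0 \<le> lo\<close> \<open>lo \<le> hi\<close> by auto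
    ultimately have "lo - step N < \<tau>" "\<tau> \<le> hi" by (auto simp: algebra_simps)
    moreover have "s - \<delta> / 2 \<le> lo" "hi \<le> s + \<delta> / 2" "hi \<le> T"
      using assms(4,5,6) unfolding lo_def hi_def abs_le_iff by auto
    moreover have "0 \<le> \<tau>" unfolding \<tau>_def using step_pos[of N] by simp
    ultimately have "0 \<le> \<tau>" "\<tau> \<le> T" "\<bar>\<tau> - s\<bar> \<le> \<delta>"
      using assms(7) by (auto simp: abs_le_iff)
    then show "\<bar>rhs_tr N (euler N m) i - c\<bar> \<le> \<epsilon>"
      using close unfolding c_def euler_eq_interp \<tau>_def by blast
  qed
  moreover have "\<bar>interp N s i - interp N y i - (s - y) * c\<bar>
      = \<bar>interp N y i - interp N s i - (y - s) * c\<bar>"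
    by (simp add: abs_minus_commute algebra_simps)
  ultimately show ?thesis
    unfolding c_def[symmetric] lo_def hi_def by (cases "s \<le> y") (auto simp: abs_if)
qed

lemma Csol_has_derivative:
  assumes s0: "0 \<le> s" and "i \<ge> 1"
  shows "((\<lambda>\<tau>. Csol \<tau> i) has_real_derivative rhs i s) (at s within {0..})"
  unfolding has_field_derivative_iff tendsto_iff
proof (intro allI impI)
  fix e :: real assume "0 < e"
  define T where "T = s + 1"
  obtain d0 where "d0 > 0" and equicont: "\<forall>N \<tau> \<tau>'. T + 1 \<le> real N \<and> i + 1 \<le> N \<and> 0 \<le> \<tau> \<and> \<tau> \<le> T \<and>
      0 \<le> \<tau>' \<and> \<tau>' \<le> T \<and> \<bar>\<tau> - \<tau>'\<bar> \<le> d0 \<longrightarrow> \<bar>rhs_tr N (interp N \<tau>) i - rhs_tr N (interp N \<tau>') i\<bar> \<le> e/2"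
    using rhs_tr_equicont[of T i "e/2"] s0 \<open>i \<ge> 1\<close> \<open>0 < e\<close> by (auto simp: T_def)
  define d where "d = min 1 (d0/2)"
  show "\<forall>\<^sub>F y in at s within {0..}. dist ((Csol y i - Csol s i) / (y - s)) (rhs i s) < e"
    unfolding eventually_at
  proof (intro exI[of _ d] conjI ballI impI)
    show "0 < d" unfolding d_def using \<open>d0 > 0\<close> by simp
    fix y :: real assume "y \<in> {0..}" and "y \<noteq> s \<and> dist y s < d"
    then have y: "0 \<le> y" "y \<le> T" "\<bar>y - s\<bar> \<le> d0 / 2" "y \<noteq> s"
      by (auto simp: dist_real_def d_def T_def)
    have "(\<lambda>n. \<bar>interp (sub n) y i - interp (sub n) s i
          - (y - s) * rhs_tr (sub n) (interp (sub n) s) i\<bar>)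
        \<longlonglongrightarrow> \<bar>Csol y i - Csol s i - (y - s) * rhs i s\<bar>"
      by (intro tendsto_intros Csol_lim rhs_tr_interp_lim s0 y(1) \<open>i \<ge> 1\<close>)
    moreover obtain n0 where n0: "\<forall>n\<ge>n0. max (T + 1) (max (real i + 1) (2 / d0)) \<le> real (sub n)"
      using sub_eventually_ge by blast
    have "\<bar>interp (sub n) y i - interp (sub n) s i - (y - s) * rhs_tr (sub n) (interp (sub n) s) i\<bar>
        \<le> \<bar>y - s\<bar> * (e/2)" if "n \<ge> n0" for n
    proof (rule interp_first_order[where \<delta>=d0 and T=T])
      have N: "T + 1 \<le> real (sub n)" "real i + 1 \<le> real (sub n)" "2 / d0 \<le> real (sub n)"
        using n0 that by auto
      show "\<bar>rhs_tr (sub n) (interp (sub n) \<tau>) i - rhs_tr (sub n) (interp (sub n) s) i\<bar> \<le> e/2"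
        if "0 \<le> \<tau>" "\<tau> \<le> T" "\<bar>\<tau> - s\<bar> \<le> d0" for \<tau>
        using equicont N that s0 by (auto simp: T_def)
      have "step (sub n) \<le> 1 / (real (sub n) + 1)" by (rule step_le)
      also have "\<dots> \<le> d0 / 2" using N \<open>d0 > 0\<close> by (simp add: field_simps)
      finally show "step (sub n) \<le> d0 / 2" .
    qed (use s0 y in \<open>auto simp: T_def\<close>)
    ultimately have "\<bar>Csol y i - Csol s i - (y - s) * rhs i s\<bar> \<le> \<bar>y - s\<bar> * (e/2)"
      by (intro LIMSEQ_le_const2) auto
    moreover have "(Csol y i - Csol s i) / (y - s) - rhs i s
        = (Csol y i - Csol s i - (y - s) * rhs i s) / (y - s)"
      using y(4) by (simp add: field_simps)
    ultimately have "\<bar>(Csol y i - Csol s i) / (y - s) - rhs i s\<bar> \<le> e / 2"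
      using y(4) by (simp add: abs_divide divide_le_eq mult.commute)
    then show "dist ((Csol y i - Csol s i) / (y - s)) (rhs i s) < e"
      using \<open>0 < e\<close> by (simp add: dist_real_def)
  qed
qed

lemma rhs_continuous:
  assumes s0: "0 \<le> s0" and i1: "i \<ge> 1"
  shows "((\<lambda>s. rhs i s) \<longlongrightarrow> rhs i s0) (at s0 within {0..})"
proof (cases "i = 1")
  case True
  have e: "\<And>s. rhs i s = lam - (Csol s 1 * asum a (Csol s) + a 1 * (Csol s 1)^2)" using True
    by (simp add: rhs_def consumption_def)
  show ?thesis unfolding e
    by (intro tendsto_intros Csol_component_continuous asum_Csol_continuous s0) auto
next
  case False
  then have e: "\<And>s. rhs i s = a (i-1) * Csol s 1 * Csol s (i-1) - b (i-1+1) * Csol s (i-1+1)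
      - (a i * Csol s 1 * Csol s i - b (i+1) * Csol s (i+1))"
    by (simp add: rhs_def flux_def)
  have i2: "i - 1 \<ge> 1" "i - 1 + 1 \<ge> 1" using False i1 by auto
  show ?thesis unfolding e by (intro tendsto_intros Csol_component_continuous s0 i2 i1) auto
qed

lemma consumption_continuous: "0 \<le> s0 \<Longrightarrow> (consumption \<longlongrightarrow> consumption s0) (at s0 within {0..})"
  unfolding consumption_def
    by (intro tendsto_intros Csol_component_continuous asum_Csol_continuous) auto

lemma Csol_integral_eq:
  assumes t0: "0 \<le> t" and i2: "i \<ge> 2"
  shows "Csol t i = Csol 0 i + (LINT s:{0..t}|lborel. flux a b (Csol s) (i - 1)
      - flux a b (Csol s) i)"
proof -
  have i1: "i \<ge> 1" using i2 by simp
  have Ge: "\<And>s. rhs i s = flux a b (Csol s) (i - 1) - flux a b (Csol s) i" using i2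
    by (simp add: rhs_def)
  have "(LBINT s=(0::real)..t. rhs i s) = Csol t i - Csol 0 i"
  proof (rule interval_integral_FTC_finite[where F="\<lambda>\<tau>. Csol \<tau> i" and f="rhs i" and a=0 and b=t, simplified])
    show "continuous_on {min 0 t..max 0 t} (rhs i)" using t0 rhs_continuous[OF _ i1]
      by (simp add: continuous_on_from_within_halfline)
    fix x assume "min 0 t \<le> x" "x \<le> max 0 t"
    then have x: "0 \<le> x" "x \<le> t" using t0 by auto
    have "((\<lambda>\<tau>. Csol \<tau> i) has_real_derivative rhs i x) (at x within {0..})"
      using Csol_has_derivative[OF x(1) i1] .
    then have "((\<lambda>\<tau>. Csol \<tau> i) has_real_derivative rhs i x) (at x within {min 0 t..max 0 t})"
      by (rule DERIV_subset) (use t0 in auto)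
    then show "((\<lambda>\<tau>. Csol \<tau> i) has_vector_derivative rhs i x) (at x within {min 0 t..max 0 t})"
      by (simp add: has_real_derivative_iff_has_vector_derivative)
  qed
  then have "(LINT s:{0..t}|lborel. rhs i s) = Csol t i - Csol 0 i"
    using interval_integral_Icc[OF t0, of "rhs i"] by linarith
  then show ?thesis unfolding Ge by simp
qed

lemma Csol_1_integral_eq:
  assumes t0: "0 \<le> t"
  shows "Csol t 1 = Csol 0 1 + lam * t - (LINT s:{0..t}|lborel. Csol s 1 * asum a (Csol s)
      + a 1 * (Csol s 1)\<^sup>2)"
proof -
  have "(LBINT s=(0::real)..t. consumption s) = (lam * t - Csol t 1) - (lam * 0 - Csol 0 1)"
  proof (rule interval_integral_FTC_finite[where F="\<lambda>\<tau>. lam * \<tau> - Csol \<tau> 1"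
        and f="consumption" and a=0 and b=t])
    show "continuous_on {min 0 t..max 0 t} consumption" using t0 consumption_continuous
      by (simp add: continuous_on_from_within_halfline)
    fix x assume "min 0 t \<le> x" "x \<le> max 0 t"
    then have x: "0 \<le> x" "x \<le> t" using t0 by auto
    have d1: "((\<lambda>\<tau>. Csol \<tau> 1) has_real_derivative rhs 1 x) (at x within {0..})"
      using Csol_has_derivative[OF x(1)] by simp
    have dl: "((\<lambda>\<tau>. lam * \<tau>) has_real_derivative lam * 1) (at x within {0..})"
      by (rule DERIV_cmult[OF DERIV_ident])
    have "((\<lambda>\<tau>. lam * \<tau> - Csol \<tau> 1) has_real_derivative lam * 1 - rhs 1 x) (at x within {0..})"
      by (rule DERIV_diff[OF dl d1])
    moreover have "lam * 1 - rhs 1 x = consumption x" by (simp add: rhs_def)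
    ultimately have "((\<lambda>\<tau>. lam * \<tau> - Csol \<tau> 1) has_real_derivative consumption x) (at x within {0..})" by simp
    then have "((\<lambda>\<tau>. lam * \<tau> - Csol \<tau> 1) has_real_derivative consumption x) (at x within {min 0 t..max 0 t})"
      by (rule DERIV_subset) (use t0 in auto)
    then show "((\<lambda>\<tau>. lam * \<tau> - Csol \<tau> 1) has_vector_derivative consumption x) (at x within {min 0 t..max 0 t})"
      by (simp add: has_real_derivative_iff_has_vector_derivative)
  qed
  then have "(LINT s:{0..t}|lborel. consumption s) = lam * t - Csol t 1 + Csol 0 1"
    using interval_integral_Icc[OF t0, of consumption] by linarith
  then show ?thesis unfolding consumption_def by simp
qed

lemma asum_Csol_integrable: "0 \<le> t \<Longrightarrow> set_integrable lborel {0..t} (\<lambda>s. asum a (Csol s))"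
  unfolding set_integrable_def
  by (rule borel_integrable_compact) (auto intro: continuous_on_from_within_halfline asum_Csol_continuous)

end

lemma in_Xplus_summable_on:
  assumes "in_Xplus \<alpha> x"
  shows "(\<lambda>i. real i powr \<alpha> * x i) summable_on {1..}"
proof -
  have "(\<lambda>i. real i powr \<alpha> * \<bar>x i\<bar>) summable_on {1..} \<longleftrightarrow>
      (\<lambda>i. real i powr \<alpha> * x i) summable_on {1..}"
    using assms by (intro summable_on_cong) (simp add: in_Xplus_def)
  then show ?thesis
    using assms by (simp add: in_Xplus_def in_X_def)
qed

context euler_scheme
begin

theorem Csol_is_solution: "is_solution_global lam a b Csol"
  unfolding is_solution_global_def
proof (intro conjI allI impI ballI)
  show "0 \<le> t \<Longrightarrow> 1 \<le> i \<Longrightarrow> 0 \<le> Csol t i" for t i by (rule Csol_nonneg)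
  fix t :: real assume "0 < t"
  then have t: "0 \<le> t" by simp
  show "continuous_on {0..t} (\<lambda>s. Csol s i)" if "1 \<le> i" for i
    by (rule continuous_on_from_within_halfline) (rule Csol_component_continuous[OF _ that])
  show "(\<lambda>j. a j * Csol s j) summable_on {1..}" if "s \<in> {0..t}" for s
    using that by (intro Csol_a_summable) simp
  show "set_integrable lborel {0..t} (\<lambda>s. asum a (Csol s))"
    by (rule asum_Csol_integrable[OF t])
  show "Csol t 1 = Csol 0 1 + lam * t - (LINT s:{0..t}|lborel. Csol s 1 * asum a (Csol s)
      + a 1 * (Csol s 1)\<^sup>2)"
    by (rule Csol_1_integral_eq[OF t])
  show "Csol t i = Csol 0 i + (LINT s:{0..t}|lborel. flux a b (Csol s) (i - 1)
      - flux a b (Csol s) i)"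
    if "2 \<le> i" for i
    by (rule Csol_integral_eq[OF t that])
qed

lemma Csol_in_Xplus: "t \<ge> 0 \<Longrightarrow> in_Xplus \<alpha> (Csol t)"
  unfolding in_Xplus_def in_X_def using Csol_in_X(1) Csol_nonneg by auto

lemma Csol_moment_bounded:
  assumes w: "admissible_weight a K w" and w_c0: "(\<lambda>i. w i * c0 i) summable_on {1..}"
  shows "(\<forall>t\<in>{0..T}. (\<lambda>i. w i * Csol t i) summable_on {1..}) \<and>
    (\<exists>M. \<forall>t\<in>{0..T}. (\<Sum>\<^sub>\<infinity>i\<in>{1..}. w i * Csol t i) \<le> M)"
proof -
  define K' where "K' = max K 0"
  have w': "admissible_weight a K' w"
    using admissible_weight_mono[OF w] by (simp add: K'_def)
  then have w_nonneg: "\<And>i. i \<ge> 1 \<Longrightarrow> 0 \<le> w i"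
    by (auto simp: admissible_weight_def)
  define W0 where "W0 = (\<Sum>\<^sub>\<infinity>i\<in>{1..}. w i * c0 i)"
  have W0: "(\<Sum>i\<in>{2..N}. w i * c0 i) \<le> W0" for N
    unfolding W0_def using w_nonneg c0_nonneg
    by (intro finite_sum_le_infsum[OF w_c0]) auto
  define M where "M = w 1 * C1_bound (T+1) + moment_bound w K' W0 (T+1)"
  have partial: "sum (\<lambda>i. w i * Csol t i) F \<le> M" if "t \<in> {0..T}" "finite F" for t F
    unfolding M_def using that
    by (intro Csol_weighted_sum_le[OF w' _ W0]) (auto simp: K'_def)
  have nonneg: "0 \<le> w i * Csol t i" if "t \<in> {0..T}" "i \<in> {1..}" for t i
    using w_nonneg[of i] Csol_nonneg[of t i] that by simp
  show ?thesis
    using nonneg_bounded_summable_on[OF nonneg partial] by blast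
qed

end

theorem mainTheorem1:
  fixes \<alpha> lam :: real and a b Cinit :: "nat \<Rightarrow> real" and U :: "real \<Rightarrow> real"
  assumes alpha: "0 \<le> \<alpha>" "\<alpha> \<le> 1"
    and lam: "lam \<ge> 0"
    and H1: "\<exists>A\<ge>0. \<forall>i\<ge>1. 0 \<le> a i \<and> a i \<le> A * real i powr \<alpha>"
    and H1b: "\<forall>i\<ge>1. b i \<ge> 0"
    and init: "in_Xplus \<alpha> Cinit"
    and U: "K1 U \<or> K2 U"
    and Uinit: "(\<lambda>i. U (real i powr \<alpha>) * Cinit i) summable_on {1..}"
  shows "\<exists>C :: real \<Rightarrow> nat \<Rightarrow> real.
           (\<forall>i\<ge>1. C 0 i = Cinit i) \<and>
           is_solution_global lam a b C \<and>
           (\<forall>t\<ge>0. in_Xplus \<alpha> (C t)) \<and>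
           (\<forall>t0\<ge>0. ((\<lambda>t. Xnorm \<alpha> (\<lambda>k. C t k - C t0 k)) \<longlongrightarrow> 0) (at t0 within {0..})) \<and>
           (\<forall>T>0. (\<forall>t\<in>{0..T}. (\<lambda>i. U (real i powr \<alpha>) * C t i) summable_on {1..}) \<and>
                  (\<exists>M. \<forall>t\<in>{0..T}. (\<Sum>\<^sub>\<infinity>i\<in>{1..}. U (real i powr \<alpha>) * C t i) \<le> M))"
proof -
  obtain A where "A \<ge> 0" and a: "\<And>i. i \<ge> 1 \<Longrightarrow> 0 \<le> a i \<and> a i \<le> A * real i powr \<alpha>"
    using H1 by auto
  have Cinit: "\<And>i. i \<ge> 1 \<Longrightarrow> 0 \<le> Cinit i"
    using init by (simp add: in_Xplus_def)
  obtain g where g: "admissible_weight a (2 * A) g" "\<And>i. i \<ge> 1 \<Longrightarrow> real i powr \<alpha> \<le> g i"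
    "(\<lambda>i. g i * Cinit i) summable_on {1..}"
    "\<And>M. eventually (\<lambda>i. M * real i powr \<alpha> \<le> g i) sequentially"
    by (rule superlinear_admissible_weight[OF alpha a Cinit in_Xplus_summable_on[OF init]])
      auto
  interpret euler_scheme \<alpha> lam A "2 * A" a b Cinit g
  proof
    show "0 \<le> \<alpha>" "\<alpha> \<le> 1" "0 \<le> lam" "0 \<le> A" "0 \<le> 2 * A"
      using alpha lam \<open>A \<ge> 0\<close> by auto
    show "0 \<le> a i" "a i \<le> A * real i powr \<alpha>" "0 \<le> b i" if "i \<ge> 1" for i
      using a[OF that] H1b that by auto
  qed (use g Cinit in auto)
  obtain K where "admissible_weight a K (\<lambda>i. U (real i powr \<alpha>))"
    using K_class_admissible_weight[OF U alpha \<open>A \<ge> 0\<close> a] by blast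
  note U_moment = Csol_moment_bounded[OF this Uinit]
  show ?thesis
    by (intro exI[of _ Csol] conjI allI impI Csol_is_solution Csol_in_Xplus Csol_Xnorm_continuous
        Csol_0 U_moment[THEN conjunct1] U_moment[THEN conjunct2])
qed

end
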